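(* Assume (L1) holds. If $s(\mathscr L)$ is the principal eigenvalue of $\mathscr L$, then $s(\mathscr L)>\theta_M$.
   Context: $\Omega\subset\mathbb R^N$ bounded with smooth boundary, $T>0$, $m\ge1$, $Q_T=\bar\Omega\times(0,T]$. For each $i\in\{1,\dots,m\}$, $d_i>0$, $J_i:\mathbb R^{2N}\to[0,\infty)$ continuous with $J_i(x,x)>0$, $\int_{\mathbb R^N}J_i(x,y)dy=1$. $\ell_{ik}\in C(\bar Q_T)$ are $T$-periodic in $t$, $L=(\ell_{ik})$, $\mathscr L_i[\phi]=d_i\int_\Omega J_i(x,y)\phi_i(y,t)dy+\sum_k\ell_{ik}\phi_k-\partial_t\phi_i$ on $T$-periodic continuous functions, $C^1$ in $t$; $s(\mathscr L)$ is its spectral bound; it is the principal eigenvalue if it is an eigenvalue with an eigenfunction having all components strictly positive on $\bar\Omega\times\mathbb R$. (L1): $\ell_{ik}\ge0$ for $i\ne k$. $\theta(x)$ is the spectral bound of $[\mathscr P_x\phi](t)=-\phi'(t)+L(x,t)\phi(t)$ on $T$-periodic $C^1$ functions $\mathbb R\to\mathbb R^m$, and $\theta_M=\max_{\bar\Omega}\theta$. *)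

theory Defs
  imports "HOL-Analysis.Analysis"
begin

text \<open>Iterated partial derivatives of a real function on real^'n
  (the list is applied from the right: the head is the outermost derivative).\<close>
fun pderivs :: "'n::finite list \<Rightarrow> (real^'n \<Rightarrow> real) \<Rightarrow> real^'n \<Rightarrow> real" where
  "pderivs [] g = g"
| "pderivs (i # is) g = (\<lambda>x. deriv (\<lambda>h. pderivs is g (x + h *\<^sub>R axis i 1)) 0)"

definition smooth_on :: "(real^'n::finite) set \<Rightarrow> (real^'n \<Rightarrow> real) \<Rightarrow> bool" where
  "smooth_on U g \<longleftrightarrow>
     (\<forall>is. continuous_on U (pderivs is g) \<and>
       (\<forall>i. \<forall>x\<in>U. ((\<lambda>h. pderivs is g (x + h *\<^sub>R axis i 1)) has_real_derivative pderivs (i # is) g x) (at 0)))"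

definition smooth_boundary :: "(real^'n::finite) set \<Rightarrow> bool" where
  "smooth_boundary \<Omega> \<longleftrightarrow>
     (\<forall>z\<in>frontier \<Omega>. \<exists>U g. open U \<and> z \<in> U \<and> smooth_on U g \<and>
        (\<forall>x\<in>U. x \<in> \<Omega> \<longleftrightarrow> g x < 0) \<and> (\<exists>i. pderivs [i] g z \<noteq> 0))"

text \<open>Functions are compared / normed only on the set S. X is the (complexified) Banach
  space with the sup norm over S, D the domain, A the operator.\<close>

definition supn :: "'a set \<Rightarrow> ('a \<Rightarrow> complex^'m::finite) \<Rightarrow> real" where
  "supn S f = (SUP p\<in>S. norm (f p))"

definition cscale :: "complex \<Rightarrow> complex^'m::finite \<Rightarrow> complex^'m" where
  "cscale \<mu> v = (\<chi> i. \<mu> * v $ i)"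

definition in_resolvent ::
  "'a set \<Rightarrow> ('a \<Rightarrow> complex^'m::finite) set \<Rightarrow> ('a \<Rightarrow> complex^'m) set
    \<Rightarrow> (('a \<Rightarrow> complex^'m) \<Rightarrow> 'a \<Rightarrow> complex^'m) \<Rightarrow> complex \<Rightarrow> bool" where
  "in_resolvent S X D A \<mu> \<longleftrightarrow>
     (\<forall>\<psi>\<in>X. \<exists>\<phi>\<in>D. \<forall>p\<in>S. cscale \<mu> (\<phi> p) - A \<phi> p = \<psi> p) \<and>
     (\<exists>C. \<forall>\<phi>\<in>D. supn S \<phi> \<le> C * supn S (\<lambda>p. cscale \<mu> (\<phi> p) - A \<phi> p))"

definition spectrum_op ::
  "'a set \<Rightarrow> ('a \<Rightarrow> complex^'m::finite) set \<Rightarrow> ('a \<Rightarrow> complex^'m) set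
    \<Rightarrow> (('a \<Rightarrow> complex^'m) \<Rightarrow> 'a \<Rightarrow> complex^'m) \<Rightarrow> complex set" where
  "spectrum_op S X D A = {\<mu>. \<not> in_resolvent S X D A \<mu>}"

text \<open>Spectral bound, sup of real parts of the spectrum (-infinity if the spectrum is empty).\<close>
definition spectral_bound ::
  "'a set \<Rightarrow> ('a \<Rightarrow> complex^'m::finite) set \<Rightarrow> ('a \<Rightarrow> complex^'m) set
    \<Rightarrow> (('a \<Rightarrow> complex^'m) \<Rightarrow> 'a \<Rightarrow> complex^'m) \<Rightarrow> ereal" where
  "spectral_bound S X D A = (SUP \<mu>\<in>spectrum_op S X D A. ereal (Re \<mu>))"

definition is_principal_eigenvalue ::
  "'a set \<Rightarrow> ('a \<Rightarrow> complex^'m::finite) set \<Rightarrow> ('a \<Rightarrow> complex^'m) set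
    \<Rightarrow> (('a \<Rightarrow> complex^'m) \<Rightarrow> 'a \<Rightarrow> complex^'m) \<Rightarrow> bool" where
  "is_principal_eigenvalue S X D A \<longleftrightarrow>
     (\<exists>s::real. spectral_bound S X D A = ereal s \<and>
        (\<exists>\<phi>\<in>D. (\<forall>p\<in>S. \<forall>i. Im (\<phi> p $ i) = 0 \<and> Re (\<phi> p $ i) > 0) \<and>
                 (\<forall>p\<in>S. A \<phi> p = cscale (complex_of_real s) (\<phi> p))))"

definition QS :: "(real^'n::finite) set \<Rightarrow> ((real^'n) \<times> real) set" where
  "QS \<Omega> = closure \<Omega> \<times> UNIV"

definition Xper :: "(real^'n::finite) set \<Rightarrow> real \<Rightarrow> ((real^'n) \<times> real \<Rightarrow> complex^'m::finite) set" where
  "Xper \<Omega> T = {\<phi>. continuous_on (QS \<Omega>) \<phi> \<and> (\<forall>x\<in>closure \<Omega>. \<forall>t. \<phi> (x, t + T) = \<phi> (x, t))}"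

definition Dper :: "(real^'n::finite) set \<Rightarrow> real \<Rightarrow> ((real^'n) \<times> real \<Rightarrow> complex^'m::finite) set" where
  "Dper \<Omega> T = {\<phi> \<in> Xper \<Omega> T. \<exists>\<phi>'\<in>Xper \<Omega> T. \<forall>x\<in>closure \<Omega>. \<forall>t.
       ((\<lambda>s. \<phi> (x, s)) has_vector_derivative \<phi>' (x, t)) (at t)}"

definition Lop :: "(real^'n::finite) set \<Rightarrow> ('m::finite \<Rightarrow> real) \<Rightarrow> ('m \<Rightarrow> real^'n \<Rightarrow> real^'n \<Rightarrow> real)
     \<Rightarrow> ('m \<Rightarrow> 'm \<Rightarrow> real^'n \<Rightarrow> real \<Rightarrow> real)
     \<Rightarrow> ((real^'n) \<times> real \<Rightarrow> complex^'m) \<Rightarrow> (real^'n) \<times> real \<Rightarrow> complex^'m" where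
  "Lop \<Omega> d J l \<phi> = (\<lambda>(x, t). \<chi> i.
       complex_of_real (d i) * integral \<Omega> (\<lambda>y. complex_of_real (J i x y) * \<phi> (y, t) $ i)
     + (\<Sum>k\<in>UNIV. complex_of_real (l i k x t) * \<phi> (x, t) $ k)
     - vector_derivative (\<lambda>s. \<phi> (x, s)) (at t) $ i)"

definition Xode :: "real \<Rightarrow> (real \<Rightarrow> complex^'m::finite) set" where
  "Xode T = {\<phi>. continuous_on UNIV \<phi> \<and> (\<forall>t. \<phi> (t + T) = \<phi> t)}"

definition Dode :: "real \<Rightarrow> (real \<Rightarrow> complex^'m::finite) set" where
  "Dode T = {\<phi> \<in> Xode T. \<exists>\<phi>'\<in>Xode T. \<forall>t. (\<phi> has_vector_derivative \<phi>' t) (at t)}"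

definition Pop :: "('m::finite \<Rightarrow> 'm \<Rightarrow> real^'n::finite \<Rightarrow> real \<Rightarrow> real) \<Rightarrow> real^'n
     \<Rightarrow> (real \<Rightarrow> complex^'m) \<Rightarrow> real \<Rightarrow> complex^'m" where
  "Pop l x \<phi> = (\<lambda>t. \<chi> i. - (vector_derivative \<phi> (at t) $ i)
       + (\<Sum>k\<in>UNIV. complex_of_real (l i k x t) * \<phi> t $ k))"

definition theta :: "real \<Rightarrow> ('m::finite \<Rightarrow> 'm \<Rightarrow> real^'n::finite \<Rightarrow> real \<Rightarrow> real) \<Rightarrow> real^'n \<Rightarrow> ereal" where
  "theta T l x = spectral_bound (UNIV::real set) (Xode T :: (real \<Rightarrow> complex^'m) set) (Dode T) (Pop l x)"

definition theta_M :: "(real^'n::finite) set \<Rightarrow> real \<Rightarrow> ('m::finite \<Rightarrow> 'm \<Rightarrow> real^'n \<Rightarrow> real \<Rightarrow> real) \<Rightarrow> ereal" where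
  "theta_M \<Omega> T l = (SUP x\<in>closure \<Omega>. theta T l x)"

end

theory Submission
  imports Defs
begin

text \<open>
  Let \<open>\<phi> > 0\<close> be the principal eigenfunction, \<open>\<L>[\<phi>] = s \<phi>\<close>. For fixed \<open>x\<close>, the slice
  \<open>u = \<phi>(x, \<cdot>)\<close> satisfies \<open>-u' + L(x,t) u = s u - d \<integral>J \<phi>\<close>, and since \<open>J\<close> is positive
  near the diagonal while \<open>\<phi>\<close> is bounded away from \<open>0\<close> and \<open>\<infinity>\<close>, the nonlocal term dominates
  \<open>\<gamma> u\<close> for some \<open>\<gamma> > 0\<close> independent of \<open>x\<close>. Thus \<open>u\<close> is a positive periodic strict
  supersolution, \<open>P\<^sub>x u \<le> (s - \<gamma>) u\<close>.

  For \<open>Re \<mu> > s - \<gamma>\<close>, shift by a constant \<open>c\<close> making \<open>L + c\<close> entrywise nonnegative and put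
  \<open>\<nu> = \<mu> + c\<close>. Then \<open>(\<mu> - P\<^sub>x) \<phi> = \<psi>\<close> becomes \<open>\<phi> = R\<^sub>\<nu> \<psi> + R\<^sub>\<nu> (L + c) \<phi>\<close>, where
  \<open>R\<^sub>\<nu>\<close> inverts \<open>d/dt + \<nu>\<close> on periodic functions. The supersolution inequality says that
  \<open>R\<^sub>\<nu> (L + c)\<close> is a contraction for the sup norm weighted by \<open>u\<close>, so a Neumann series
  solves the equation with an a priori bound. Hence \<open>\<theta>(x) \<le> s - \<gamma>\<close> for every \<open>x\<close>, and
  \<open>\<theta>\<^sub>M \<le> s - \<gamma> < s\<close>.
\<close>

lemma periodic_add_nat_mult:
  fixes f :: "real \<Rightarrow> 'a"
  assumes per: "\<And>t. f (t + T) = f t"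
  shows "f (t + real n * T) = f t"
proof (induction n)
  case (Suc n)
  have "f (t + real (Suc n) * T) = f ((t + real n * T) + T)" by (simp add: algebra_simps)
  also have "\<dots> = f t" using per Suc by simp
  finally show ?case .
qed simp

lemma periodic_value_in_period:
  fixes f :: "real \<Rightarrow> 'a"
  assumes T: "T > 0" and per: "\<And>t. f (t + T) = f t"
  obtains t' where "t' \<in> {0..T}" and "f t = f t'"
proof -
  define k where "k = \<lfloor>t / T\<rfloor>"
  define t' where "t' = t - of_int k * T"
  have "of_int k \<le> t / T" "t / T < of_int k + 1" unfolding k_def by linarith+
  then have "of_int k * T \<le> t" "t < (of_int k + 1) * T" using T by (simp_all add: field_simps)
  then have t': "t' \<in> {0..T}" unfolding t'_def by (auto simp: algebra_simps)
  show ?thesis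
  proof (cases "k \<ge> 0")
    case True
    then have "t = t' + real (nat k) * T" unfolding t'_def by simp
    then have "f t = f t'" using periodic_add_nat_mult[of f T t' "nat k", OF per] by simp
    then show ?thesis using that t' by blast
  next
    case False
    then have "t' = t + real (nat (- k)) * T" unfolding t'_def by simp
    then have "f t' = f t" using periodic_add_nat_mult[of f T t "nat (- k)", OF per] by simp
    then show ?thesis using that t' by metis
  qed
qed

lemma periodic_bounded:
  fixes f :: "real \<Rightarrow> 'a::real_normed_vector"
  assumes T: "T > 0" and per: "\<And>t. f (t + T) = f t" and cont: "continuous_on UNIV f"
  obtains B where "\<And>t. norm (f t) \<le> B"
proof -
  have "compact (f ` {0..T})"
    by (intro compact_continuous_image continuous_on_subset[OF cont]) auto
  then obtain B where B: "\<And>y. y \<in> f ` {0..T} \<Longrightarrow> norm y \<le> B"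
    using compact_imp_bounded bounded_iff by metis
  have "norm (f t) \<le> B" for t
    by (rule periodic_value_in_period[where f=f and t=t, OF T per]) (use B in auto)
  then show ?thesis using that by blast
qed

lemma periodic_attains_inf:
  fixes g :: "'a::topological_space \<times> real \<Rightarrow> real"
  assumes T: "T > 0" and K: "compact K" "K \<noteq> {}" and cont: "continuous_on (K \<times> UNIV) g"
    and per: "\<And>x t. x \<in> K \<Longrightarrow> g (x, t + T) = g (x, t)"
  obtains p where "p \<in> K \<times> UNIV" and "\<And>x t. x \<in> K \<Longrightarrow> g p \<le> g (x, t)"
proof -
  have "\<exists>p\<in>K \<times> {0..T}. \<forall>y\<in>K \<times> {0..T}. g p \<le> g y"
    using T K by (intro continuous_attains_inf compact_Times continuous_on_subset[OF cont]) auto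
  then obtain p where p: "p \<in> K \<times> {0..T}" "\<And>y. y \<in> K \<times> {0..T} \<Longrightarrow> g p \<le> g y"
    by blast
  have "g p \<le> g (x, t)" if x: "x \<in> K" for x t
    by (rule periodic_value_in_period[OF T, of "\<lambda>t. g (x, t)" t])
       (use per[OF x] p(2)[of "(x, _)"] x in auto)
  then show ?thesis using that p(1) by blast
qed

lemma Xode_bounded:
  assumes "T > 0" and "f \<in> Xode T"
  obtains B where "\<And>t. norm (f t) \<le> B"
  using assms periodic_bounded[of T f] by (auto simp: Xode_def)

section \<open>The resolvent of \<open>d/dt + \<nu>\<close> on periodic functions\<close>

text \<open>Variation of constants: for \<open>exp (- T \<nu>) \<noteq> 1\<close> this is the unique \<open>T\<close>-periodic
  solution of \<open>w' + \<nu> w = h\<close>.\<close>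
definition periodic_resolvent :: "real \<Rightarrow> 'a::{real_normed_field,banach} \<Rightarrow> (real \<Rightarrow> 'a) \<Rightarrow> real \<Rightarrow> 'a" where
  "periodic_resolvent T \<nu> h t = (1 / (1 - exp (- (T *\<^sub>R \<nu>)))) *
      (exp (- (t *\<^sub>R \<nu>)) * integral {t-T..t} (\<lambda>\<tau>. exp (\<tau> *\<^sub>R \<nu>) * h \<tau>))"

lemma periodic_resolvent_unique:
  fixes w w' h :: "real \<Rightarrow> 'a::{real_normed_field,banach}"
  assumes T: "T > 0" and nondeg: "exp (- (T *\<^sub>R \<nu>)) \<noteq> 1"
    and deriv: "\<And>t. (w has_vector_derivative w' t) (at t)"
    and per: "\<And>t. w (t + T) = w t"
    and eq: "\<And>t. w' t + \<nu> * w t = h t"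
  shows "w t = periodic_resolvent T \<nu> h t"
proof -
  let ?E = "\<lambda>\<tau>. exp (\<tau> *\<^sub>R \<nu>) * w \<tau>"
  let ?e = "exp (- (T *\<^sub>R \<nu>))"
  have "(?E has_vector_derivative exp (\<tau> *\<^sub>R \<nu>) * w' \<tau> + exp (\<tau> *\<^sub>R \<nu>) * \<nu> * w \<tau>) (at \<tau> within S)"
    for \<tau> S
    by (intro has_vector_derivative_mult exp_scaleR_has_vector_derivative_right
          has_vector_derivative_at_within[OF deriv])
  then have "(?E has_vector_derivative exp (\<tau> *\<^sub>R \<nu>) * h \<tau>) (at \<tau> within S)" for \<tau> S
    by (simp add: algebra_simps flip: eq)
  then have "((\<lambda>\<tau>. exp (\<tau> *\<^sub>R \<nu>) * h \<tau>) has_integral ?E t - ?E (t - T)) {t-T..t}"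
    using T by (intro fundamental_theorem_of_calculus) auto
  then have "integral {t-T..t} (\<lambda>\<tau>. exp (\<tau> *\<^sub>R \<nu>) * h \<tau>) = ?E t - ?E (t - T)"
    by (rule integral_unique)
  also have "\<dots> = exp (t *\<^sub>R \<nu>) * (1 - ?e) * w t"
    using per[of "t - T"] by (simp add: scaleR_diff_left exp_add[symmetric] algebra_simps)
  finally have I: "integral {t-T..t} (\<lambda>\<tau>. exp (\<tau> *\<^sub>R \<nu>) * h \<tau>) = exp (t *\<^sub>R \<nu>) * (1 - ?e) * w t" .
  have "periodic_resolvent T \<nu> h t =
      (1 / (1 - ?e)) * (1 - ?e) * ((exp (- (t *\<^sub>R \<nu>)) * exp (t *\<^sub>R \<nu>)) * w t)"
    unfolding periodic_resolvent_def I by (simp only: ac_simps)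
  also have "\<dots> = w t"
  proof -
    have "exp (- (t *\<^sub>R \<nu>)) * exp (t *\<^sub>R \<nu>) = 1"
      by (simp add: exp_add[symmetric])
    moreover have "1 - ?e \<noteq> 0"
      using nondeg by (metis eq_iff_diff_eq_0)
    then have "(1 / (1 - ?e)) * (1 - ?e) = 1"
      unfolding divide_inverse mult_1_left by (rule left_inverse)
    ultimately show ?thesis by simp
  qed
  finally show ?thesis by (rule sym)
qed

lemma integral_has_vector_derivative_at:
  fixes H :: "real \<Rightarrow> 'a::banach"
  assumes H: "continuous_on UNIV H" and "c < v"
  shows "((\<lambda>u. integral {c..u} H) has_vector_derivative H v) (at v)"
proof -
  have "((\<lambda>u. integral {c..u} H) has_vector_derivative H v) (at v within {c..v+1})"
    using \<open>c < v\<close> by (intro integral_has_vector_derivative continuous_on_subset[OF H]) simp_all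
  then have "((\<lambda>u. integral {c..u} H) has_vector_derivative H v) (at v within {c<..<v+1})"
    by (rule has_vector_derivative_within_subset) auto
  moreover have "at v within {c<..<v+1} = at v"
    by (rule at_within_open) (use \<open>c < v\<close> in simp_all)
  ultimately show ?thesis by simp
qed

lemma sliding_integral_has_vector_derivative:
  fixes H :: "real \<Rightarrow> 'a::banach"
  assumes H: "continuous_on UNIV H" and T: "T > 0"
  shows "((\<lambda>t. integral {t-T..t} H) has_vector_derivative (H t0 - H (t0 - T))) (at t0)"
proof -
  define c where "c = t0 - T - 1"
  let ?G = "\<lambda>u. integral {c..u} H"
  have "(?G has_vector_derivative H t0) (at t0)"
    using T by (intro integral_has_vector_derivative_at H) (auto simp: c_def)
  moreover have "((?G \<circ> (\<lambda>t. t - T)) has_vector_derivative (1 *\<^sub>R H (t0 - T))) (at t0)"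
  proof (rule vector_diff_chain_at)
    show "((\<lambda>t. t - T) has_vector_derivative 1) (at t0)"
      using has_vector_derivative_diff[OF has_vector_derivative_id has_vector_derivative_const] by simp
    show "(?G has_vector_derivative H (t0 - T)) (at (t0 - T))"
      by (rule integral_has_vector_derivative_at[OF H]) (simp add: c_def)
  qed
  then have "((\<lambda>t. ?G (t - T)) has_vector_derivative H (t0 - T)) (at t0)"
    by (simp add: o_def)
  ultimately have "((\<lambda>t. ?G t - ?G (t - T)) has_vector_derivative (H t0 - H (t0 - T))) (at t0)"
    by (rule has_vector_derivative_diff)
  then show ?thesis
  proof (rule has_vector_derivative_transform_within_open[where S="{c+T<..}"])
    fix y assume y: "y \<in> {c+T<..}"
    have "H integrable_on {c..y}"
      by (intro integrable_continuous_real continuous_on_subset[OF H]) auto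
    then have "integral {c..y - T} H + integral {y - T..y} H = integral {c..y} H"
      using y T by (intro Henstock_Kurzweil_Integration.integral_combine) (simp_all add: c_def)
    then show "?G y - ?G (y - T) = integral {y-T..y} H" by (simp add: algebra_simps)
  qed (simp_all add: c_def)
qed

lemma continuous_on_exp_scaleR_mult:
  fixes h :: "real \<Rightarrow> 'a::{real_normed_field,banach}"
  assumes "continuous_on UNIV h"
  shows "continuous_on UNIV (\<lambda>\<tau>. exp (\<tau> *\<^sub>R \<nu>) * h \<tau>)"
  by (intro continuous_intros assms continuous_on_exp)

lemma integrable_exp_scaleR_mult:
  fixes h :: "real \<Rightarrow> 'a::{real_normed_field,banach}"
  assumes "continuous_on UNIV h"
  shows "(\<lambda>\<tau>. exp (\<tau> *\<^sub>R \<nu>) * h \<tau>) integrable_on {a..b}"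
  using continuous_on_subset[OF continuous_on_exp_scaleR_mult[OF assms]]
  by (intro integrable_continuous_real) auto

lemma periodic_resolvent_has_vector_derivative:
  fixes h :: "real \<Rightarrow> 'a::{real_normed_field,banach}"
  assumes T: "T > 0" and nondeg: "exp (- (T *\<^sub>R \<nu>)) \<noteq> 1"
    and h: "continuous_on UNIV h" and per: "\<And>t. h (t + T) = h t"
  shows "(periodic_resolvent T \<nu> h has_vector_derivative (h t - \<nu> * periodic_resolvent T \<nu> h t)) (at t)"
proof -
  let ?e = "exp (- (T *\<^sub>R \<nu>))"
  let ?H = "\<lambda>\<tau>. exp (\<tau> *\<^sub>R \<nu>) * h \<tau>"
  let ?F = "\<lambda>t. integral {t-T..t} ?H"
  have "((\<lambda>t. (1 / (1 - ?e)) * (exp (t *\<^sub>R (- \<nu>)) * ?F t)) has_vector_derivative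
      (1 / (1 - ?e)) * (exp (t *\<^sub>R (- \<nu>)) * (?H t - ?H (t - T)) + exp (t *\<^sub>R (- \<nu>)) * (- \<nu>) * ?F t))
      (at t)"
    by (intro has_vector_derivative_mult_right has_vector_derivative_mult
        exp_scaleR_has_vector_derivative_right sliding_integral_has_vector_derivative
        continuous_on_exp_scaleR_mult h T)
  moreover have "(\<lambda>t. (1 / (1 - ?e)) * (exp (t *\<^sub>R (- \<nu>)) * ?F t)) = periodic_resolvent T \<nu> h"
    by (rule ext) (simp add: periodic_resolvent_def)
  moreover have "exp (t *\<^sub>R (- \<nu>)) * (?H t - ?H (t - T)) = (1 - ?e) * h t"
  proof -
    have "exp (t *\<^sub>R (- \<nu>)) * (?H t - ?H (t - T)) =
       (exp (- (t *\<^sub>R \<nu>)) * exp (t *\<^sub>R \<nu>)) * h t - (exp (- (t *\<^sub>R \<nu>)) * exp (t *\<^sub>R \<nu>)) * ?e * h t"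
      using per[of "t - T"] by (simp add: scaleR_diff_left exp_add[symmetric] algebra_simps)
    also have "\<dots> = (1 - ?e) * h t" by (simp add: exp_add[symmetric] algebra_simps)
    finally show ?thesis .
  qed
  moreover have "(1 / (1 - ?e)) * ((1 - ?e) * h t + exp (t *\<^sub>R (- \<nu>)) * (- \<nu>) * ?F t)
      = h t - \<nu> * periodic_resolvent T \<nu> h t"
    using nondeg by (simp add: periodic_resolvent_def field_simps)
  ultimately show ?thesis by simp
qed

lemma periodic_resolvent_periodic:
  fixes h :: "real \<Rightarrow> 'a::{real_normed_field,banach}"
  assumes per: "\<And>t. h (t + T) = h t"
  shows "periodic_resolvent T \<nu> h (t + T) = periodic_resolvent T \<nu> h t"
proof -
  let ?H = "\<lambda>\<tau>. exp (\<tau> *\<^sub>R \<nu>) * h \<tau>"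
  have "integral {t + T - T..t + T} ?H = integral {t-T..t} (\<lambda>x. ?H (x + T))"
    using integral_shift_real_ivl[where f="?H" and a=t and c=T and b="t+T"] by simp
  also have "\<dots> = integral {t-T..t} (\<lambda>x. exp (T *\<^sub>R \<nu>) * ?H x)"
    by (simp add: per scaleR_add_left exp_add algebra_simps)
  also have "\<dots> = exp (T *\<^sub>R \<nu>) * integral {t-T..t} ?H"
    by simp
  finally have I: "integral {t + T - T..t + T} ?H = exp (T *\<^sub>R \<nu>) * integral {t-T..t} ?H" .
  have "exp (- ((t + T) *\<^sub>R \<nu>)) * exp (T *\<^sub>R \<nu>) = exp (- (t *\<^sub>R \<nu>))"
    by (simp add: scaleR_add_left exp_add[symmetric])
  then show ?thesis unfolding periodic_resolvent_def I by (simp add: mult.assoc[symmetric])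
qed

lemma continuous_on_periodic_resolvent:
  fixes h :: "real \<Rightarrow> 'a::{real_normed_field,banach}"
  assumes "T > 0" and "exp (- (T *\<^sub>R \<nu>)) \<noteq> 1"
    and "continuous_on UNIV h" and "\<And>t. h (t + T) = h t"
  shows "continuous_on UNIV (periodic_resolvent T \<nu> h)"
  by (rule continuous_on_vector_derivative)
     (use periodic_resolvent_has_vector_derivative[OF assms] in auto)

lemma periodic_resolvent_sum:
  fixes f :: "'b \<Rightarrow> real \<Rightarrow> 'a::{real_normed_field,banach}"
  assumes "finite A" and "\<And>a. a \<in> A \<Longrightarrow> continuous_on UNIV (f a)"
  shows "periodic_resolvent T \<nu> (\<lambda>\<tau>. \<Sum>a\<in>A. f a \<tau>) t = (\<Sum>a\<in>A. periodic_resolvent T \<nu> (f a) t)"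
proof -
  have "integral {t-T..t} (\<lambda>\<tau>. exp (\<tau> *\<^sub>R \<nu>) * (\<Sum>a\<in>A. f a \<tau>)) =
        integral {t-T..t} (\<lambda>\<tau>. \<Sum>a\<in>A. exp (\<tau> *\<^sub>R \<nu>) * f a \<tau>)"
    by (simp add: sum_distrib_left)
  also have "\<dots> = (\<Sum>a\<in>A. integral {t-T..t} (\<lambda>\<tau>. exp (\<tau> *\<^sub>R \<nu>) * f a \<tau>))"
    using assms by (intro integral_sum integrable_exp_scaleR_mult)
  finally show ?thesis unfolding periodic_resolvent_def by (simp add: sum_distrib_left)
qed

lemma periodic_resolvent_add:
  fixes h k :: "real \<Rightarrow> 'a::{real_normed_field,banach}"
  assumes "continuous_on UNIV h" and "continuous_on UNIV k"
  shows "periodic_resolvent T \<nu> (\<lambda>\<tau>. h \<tau> + k \<tau>) t = periodic_resolvent T \<nu> h t + periodic_resolvent T \<nu> k t"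
proof -
  have "integral {t-T..t} (\<lambda>\<tau>. exp (\<tau> *\<^sub>R \<nu>) * (h \<tau> + k \<tau>)) =
        integral {t-T..t} (\<lambda>\<tau>. exp (\<tau> *\<^sub>R \<nu>) * h \<tau> + exp (\<tau> *\<^sub>R \<nu>) * k \<tau>)"
    by (simp add: distrib_left)
  also have "\<dots> = integral {t-T..t} (\<lambda>\<tau>. exp (\<tau> *\<^sub>R \<nu>) * h \<tau>) + integral {t-T..t} (\<lambda>\<tau>. exp (\<tau> *\<^sub>R \<nu>) * k \<tau>)"
    using assms by (intro integral_add integrable_exp_scaleR_mult)
  finally show ?thesis unfolding periodic_resolvent_def by (simp add: distrib_left)
qed

lemma periodic_resolvent_cmult:
  fixes h :: "real \<Rightarrow> 'a::{real_normed_field,banach}"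
  shows "periodic_resolvent T \<nu> (\<lambda>\<tau>. c * h \<tau>) t = c * periodic_resolvent T \<nu> h t"
proof -
  have "integral {t-T..t} (\<lambda>\<tau>. exp (\<tau> *\<^sub>R \<nu>) * (c * h \<tau>)) =
        c * integral {t-T..t} (\<lambda>\<tau>. exp (\<tau> *\<^sub>R \<nu>) * h \<tau>)"
    by (simp add: algebra_simps)
  then show ?thesis unfolding periodic_resolvent_def by (simp add: algebra_simps)
qed

lemma periodic_resolvent_diff:
  fixes h k :: "real \<Rightarrow> 'a::{real_normed_field,banach}"
  assumes h: "continuous_on UNIV h" and k: "continuous_on UNIV k"
  shows "periodic_resolvent T \<nu> (\<lambda>\<tau>. h \<tau> - k \<tau>) t = periodic_resolvent T \<nu> h t - periodic_resolvent T \<nu> k t"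
  using periodic_resolvent_add[OF h continuous_on_mult_left[OF k, of "- 1"], of T \<nu> t]
    periodic_resolvent_cmult[of T \<nu> "- 1" k t]
  by simp

lemma periodic_resolvent_mono:
  fixes h k :: "real \<Rightarrow> real"
  assumes "T > 0" and "r > 0" and "continuous_on UNIV h" and "continuous_on UNIV k"
    and "\<And>\<tau>. h \<tau> \<le> k \<tau>"
  shows "periodic_resolvent T r h t \<le> periodic_resolvent T r k t"
proof -
  have "integral {t-T..t} (\<lambda>\<tau>. exp (\<tau> *\<^sub>R r) * h \<tau>) \<le> integral {t-T..t} (\<lambda>\<tau>. exp (\<tau> *\<^sub>R r) * k \<tau>)"
    using assms by (intro integral_le integrable_exp_scaleR_mult mult_left_mono) auto
  moreover have "exp (- (T *\<^sub>R r)) < 1" using assms by simp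
  ultimately show ?thesis unfolding periodic_resolvent_def
    by (intro mult_left_mono) auto
qed

lemma periodic_resolvent_const:
  fixes r :: real
  assumes "T > 0" and "r > 0"
  shows "periodic_resolvent T r (\<lambda>_. e) t = e / r"
  by (rule periodic_resolvent_unique[where w'="\<lambda>_. 0", symmetric]) (use assms in auto)

lemma norm_periodic_resolvent_le:
  fixes h :: "real \<Rightarrow> complex"
  assumes T: "T > 0" and nu: "Re \<nu> > 0" and h: "continuous_on UNIV h"
  shows "norm (periodic_resolvent T \<nu> h t) \<le> periodic_resolvent T (Re \<nu>) (\<lambda>\<tau>. norm (h \<tau>)) t"
proof -
  have "T * Re \<nu> > 0" using T nu by simp
  then have e: "exp (- (T * Re \<nu>)) < 1" by simp
  have "1 - exp (- (T * Re \<nu>)) \<le> norm (1 - exp (- (T *\<^sub>R \<nu>)))"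
    using norm_triangle_ineq2[of 1 "exp (- (T *\<^sub>R \<nu>))"] by simp
  then have "norm (1 / (1 - exp (- (T *\<^sub>R \<nu>)))) \<le> 1 / (1 - exp (- (T * Re \<nu>)))"
    using e by (simp add: norm_divide divide_simps)
  moreover have "norm (integral {t-T..t} (\<lambda>\<tau>. exp (\<tau> *\<^sub>R \<nu>) * h \<tau>)) \<le>
      integral {t-T..t} (\<lambda>\<tau>. exp (\<tau> *\<^sub>R Re \<nu>) * norm (h \<tau>))"
    by (intro integral_norm_bound_integral integrable_exp_scaleR_mult h continuous_on_norm)
       (simp add: norm_mult)
  ultimately have "norm (periodic_resolvent T \<nu> h t) \<le> (1 / (1 - exp (- (T * Re \<nu>)))) *
      (exp (- (t * Re \<nu>)) * integral {t-T..t} (\<lambda>\<tau>. exp (\<tau> *\<^sub>R Re \<nu>) * norm (h \<tau>)))"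
    unfolding periodic_resolvent_def norm_mult using \<open>T * Re \<nu> > 0\<close>
    by (intro mult_mono) (auto intro!: integral_nonneg integrable_exp_scaleR_mult continuous_on_norm h)
  then show ?thesis by (simp add: periodic_resolvent_def)
qed

lemma has_vector_derivative_vec_lambda:
  fixes g :: "'m::finite \<Rightarrow> real \<Rightarrow> 'a::real_normed_vector"
  assumes "\<And>i. (g i has_vector_derivative g' i) F"
  shows "((\<lambda>t. \<chi> i. g i t) has_vector_derivative (\<chi> i. g' i)) F"
proof -
  have sum_axis: "(\<chi> i. v i) = (\<Sum>i\<in>UNIV. axis i (v i) :: 'a^'m)" for v
    by (simp add: vec_eq_iff axis_def sum_component if_distrib cong: if_cong)
  have axis_linear: "bounded_linear (axis i :: 'a \<Rightarrow> 'a^'m)" for i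
  proof (rule bounded_linear_intro[where K=1])
    fix x :: 'a
    have "norm (axis i x :: 'a^'m) \<le> (\<Sum>j\<in>UNIV. norm (axis i x $ j :: 'a))"
      unfolding norm_vec_def by (rule L2_set_le_sum) simp
    also have "\<dots> = norm x" by (simp add: axis_def if_distrib cong: if_cong)
    finally show "norm (axis i x :: 'a^'m) \<le> norm x * 1" by simp
  qed (auto simp: axis_def vec_eq_iff)
  have "((\<lambda>t. \<Sum>i\<in>UNIV. axis i (g i t)) has_vector_derivative (\<Sum>i\<in>UNIV. axis i (g' i))) F"
    by (intro has_vector_derivative_sum bounded_linear.has_vector_derivative[OF axis_linear] assms)
  then show ?thesis by (simp flip: sum_axis)
qed

lemma has_vector_derivative_vec_nth:
  assumes "(\<phi> has_vector_derivative \<phi>') F"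
  shows "((\<lambda>t. \<phi> t $ i) has_vector_derivative \<phi>' $ i) F"
  using bounded_linear.has_vector_derivative[OF bounded_linear_vec_nth assms] by simp

lemma norm_vec_le_card_mult:
  fixes x :: "'a::real_normed_vector^'m::finite"
  assumes "\<And>i. norm (x $ i) \<le> b"
  shows "norm x \<le> real CARD('m) * b"
proof -
  have "norm x \<le> (\<Sum>i\<in>UNIV. norm (x $ i))"
    unfolding norm_vec_def by (rule L2_set_le_sum) simp
  also have "\<dots> \<le> (\<Sum>i\<in>(UNIV::'m set). b)" by (intro sum_mono assms)
  finally show ?thesis by simp
qed

lemma norm_le_supn:
  assumes "\<And>t. norm (f t) \<le> B"
  shows "norm (f t) \<le> supn UNIV f"
  unfolding supn_def by (rule cSUP_upper) (use assms in \<open>auto intro!: bdd_aboveI[where M=B]\<close>)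

lemma supn_le:
  assumes "\<And>t. norm (f t) \<le> B"
  shows "supn UNIV f \<le> B"
  unfolding supn_def by (rule cSUP_least) (use assms in auto)

section \<open>A strict supersolution bounds the spectrum of the periodic ODE operator\<close>

text \<open>The weighted sup norm \<open>sup |\<phi>\<^sub>i| / u\<^sub>i\<close> is finite, and an estimate that feeds it back
  with factor \<open>q < 1\<close> bounds it.\<close>
lemma weighted_sup_bound:
  fixes \<phi> :: "real \<Rightarrow> 'a::real_normed_vector^'m::finite"
  assumes a: "a > 0" and u_lower: "\<And>i t. a \<le> u i t"
    and bounded: "\<And>t. norm (\<phi> t) \<le> B" and q: "q < 1" and C: "C \<ge> 0"
    and step: "\<And>K i t. (\<And>k \<tau>. norm (\<phi> \<tau> $ k) \<le> K * u k \<tau>) \<Longrightarrow> norm (\<phi> t $ i) \<le> C + q * K * u i t"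
  shows "norm (\<phi> t $ i) \<le> C / (a * (1 - q)) * u i t"
proof -
  define F where "F = (\<lambda>p::'m \<times> real. norm (\<phi> (snd p) $ fst p) / u (fst p) (snd p))"
  define K where "K = Sup (range F)"
  have u_pos: "u k \<tau> > 0" for k \<tau> using a u_lower[of k \<tau>] by linarith
  have "F p \<le> B / a" for p
  proof -
    have "norm (\<phi> (snd p) $ fst p) \<le> B"
      using Finite_Cartesian_Product.norm_nth_le[of "\<phi> (snd p)" "fst p"] bounded[of "snd p"] by linarith
    moreover have "0 \<le> B" using bounded[of 0] norm_ge_zero order_trans by blast
    ultimately show ?thesis unfolding F_def using a u_lower[of "fst p" "snd p"]
      by (intro frac_le) auto
  qed
  then have "bdd_above (range F)" by (intro bdd_aboveI[where M="B / a"]) auto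
  then have F_le_K: "F p \<le> K" for p unfolding K_def by (rule cSUP_upper[OF UNIV_I])
  have weighted: "norm (\<phi> \<tau> $ k) \<le> K * u k \<tau>" for k \<tau>
    using F_le_K[of "(k, \<tau>)"] u_pos[of k \<tau>] by (simp add: F_def pos_divide_le_eq)
  have "F p \<le> C / a + q * K" for p
  proof -
    obtain i t where p: "p = (i, t)" by (cases p)
    have "norm (\<phi> t $ i) / u i t \<le> (C + q * K * u i t) / u i t"
      using step[OF weighted] u_pos[of i t] by (intro divide_right_mono) auto
    also have "\<dots> = C / u i t + q * K"
      using u_pos[of i t] by (simp add: add_divide_distrib)
    also have "C / u i t \<le> C / a"
      using a u_lower[of i t] C by (intro divide_left_mono) auto
    finally show ?thesis using p by (simp add: F_def)
  qed
  then have "K \<le> C / a + q * K" unfolding K_def by (intro cSUP_least) auto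
  then have "(1 - q) * K \<le> C / a" by (simp add: algebra_simps)
  moreover have "0 < 1 - q" using q by simp
  ultimately have "K \<le> C / a / (1 - q)" by (metis pos_le_divide_eq mult.commute)
  then have "K \<le> C / (a * (1 - q))" by (simp add: divide_divide_eq_left)
  moreover have "0 \<le> u i t" using u_pos[of i t] by simp
  ultimately show ?thesis using weighted[of t i] by (meson mult_right_mono order_trans)
qed

definition ode_op :: "('m::finite \<Rightarrow> 'm \<Rightarrow> real \<Rightarrow> real) \<Rightarrow> (real \<Rightarrow> complex^'m) \<Rightarrow> real \<Rightarrow> complex^'m" where
  "ode_op L \<phi> = (\<lambda>t. \<chi> i. - (vector_derivative \<phi> (at t) $ i) + (\<Sum>k\<in>UNIV. complex_of_real (L i k t) * \<phi> t $ k))"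

lemma Pop_eq_ode_op: "Pop l x = ode_op (\<lambda>i k. l i k x)"
  by (simp add: Pop_def ode_op_def fun_eq_iff)

lemma ode_op_component:
  assumes "\<And>t. (\<phi> has_vector_derivative \<phi>' t) (at t)"
  shows "cscale \<mu> (\<phi> t) $ i - ode_op L \<phi> t $ i =
     \<mu> * \<phi> t $ i + \<phi>' t $ i - (\<Sum>k\<in>UNIV. complex_of_real (L i k t) * \<phi> t $ k)"
  using vector_derivative_at[OF assms[of t]] by (simp add: cscale_def ode_op_def)

locale periodic_supersolution =
  fixes T :: real and L :: "'m::finite \<Rightarrow> 'm \<Rightarrow> real \<Rightarrow> real"
    and u u' :: "'m \<Rightarrow> real \<Rightarrow> real" and \<sigma> a M :: real
  assumes T_pos: "T > 0"
    and L_cont: "\<And>i k. continuous_on UNIV (L i k)"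
    and L_periodic: "\<And>i k t. L i k (t + T) = L i k t"
    and L_offdiag_nonneg: "\<And>i k t. i \<noteq> k \<Longrightarrow> L i k t \<ge> 0"
    and u_deriv: "\<And>i t. (u i has_real_derivative u' i t) (at t)"
    and u'_cont: "\<And>i. continuous_on UNIV (u' i)"
    and u_periodic: "\<And>i t. u i (t + T) = u i t"
    and a_pos: "a > 0" and u_lower: "\<And>i t. a \<le> u i t" and u_upper: "\<And>i t. u i t \<le> M"
    and supersolution: "\<And>i t. (\<Sum>k\<in>UNIV. L i k t * u k t) - u' i t \<le> \<sigma> * u i t"
begin

lemma u_cont: "continuous_on UNIV (u i)"
  by (rule continuous_at_imp_continuous_on) (use u_deriv DERIV_isCont in blast)

lemma M_pos: "M > 0"
  using a_pos u_lower[of undefined 0] u_upper[of undefined 0] by linarith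

lemma weighted_le_of_norm_le:
  assumes "\<And>\<tau>. norm (h \<tau>) \<le> e"
  shows "norm (h \<tau> $ k) \<le> (e / a) * u k \<tau>"
proof -
  have e: "e \<ge> 0" using assms[of 0] norm_ge_zero order_trans by blast
  have "norm (h \<tau> $ k) \<le> e"
    using Finite_Cartesian_Product.norm_nth_le[of "h \<tau>" k] assms[of \<tau>] by linarith
  also have "\<dots> = (e / a) * a" using a_pos by simp
  also have "\<dots> \<le> (e / a) * u k \<tau>" using e a_pos u_lower[of k \<tau>] by (intro mult_left_mono) auto
  finally show ?thesis .
qed

end

text \<open>\<open>c\<close> makes \<open>L + c\<close> entrywise nonnegative, so that \<open>\<mu> - P = (d/dt + \<nu>) - (L + c)\<close> with
  \<open>\<nu> = \<mu> + c\<close> splits into an invertible part and a positive part.\<close>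
locale supersolution_shift = periodic_supersolution T L u u' \<sigma> a M
  for T and L :: "'m::finite \<Rightarrow> 'm \<Rightarrow> real \<Rightarrow> real" and u u' \<sigma> a M +
  fixes \<mu> :: complex and c :: real
  assumes mu_gt: "Re \<mu> > \<sigma>" and shift_diag: "\<And>i t. 0 \<le> L i i t + c" and shift_pos: "Re \<mu> + c > 0"
begin

definition "r = Re \<mu> + c"
definition "\<nu> = \<mu> + complex_of_real c"
definition "Lc i k t = L i k t + (if i = k then c else 0)"
definition "q = 1 - min ((Re \<mu> - \<sigma>) * a / (r * M)) (1/2)"
definition "Bop h = (\<lambda>t. \<chi> i. periodic_resolvent T \<nu> (\<lambda>\<tau>. \<Sum>k\<in>UNIV. complex_of_real (Lc i k \<tau>) * h \<tau> $ k) t)"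
definition "Rop \<psi> = (\<lambda>t. \<chi> i. periodic_resolvent T \<nu> (\<lambda>\<tau>. \<psi> \<tau> $ i) t)"

lemma r_pos: "r > 0" using shift_pos by (simp add: r_def)

lemma Re_nu: "Re \<nu> = r" by (simp add: r_def \<nu>_def)

lemma q_bounds: "q < 1" "0 \<le> q"
  using mu_gt a_pos r_pos M_pos by (auto simp: q_def)

lemma nondeg_nu: "exp (- (T *\<^sub>R \<nu>)) \<noteq> 1"
proof -
  have "norm (exp (- (T *\<^sub>R \<nu>))) = exp (- (T * r))" using Re_nu by simp
  also have "\<dots> < 1" using T_pos r_pos by simp
  finally show ?thesis by (metis norm_one less_irrefl)
qed

lemma nondeg_r: "exp (- (T *\<^sub>R r)) \<noteq> 1"
  using T_pos r_pos by simp

lemma Lc_nonneg: "0 \<le> Lc i k t"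
  using L_offdiag_nonneg[of i k t] shift_diag[of i t] by (auto simp: Lc_def)

lemma Lc_cont: "continuous_on UNIV (Lc i k)"
  unfolding Lc_def by (intro continuous_intros L_cont)

lemma Lc_periodic: "Lc i k (t + T) = Lc i k t"
  by (simp add: Lc_def L_periodic)

lemma sum_Lc:
  fixes z :: "_ \<Rightarrow> 'b::real_algebra_1"
  shows "(\<Sum>k\<in>UNIV. of_real (Lc i k t) * z k) = (\<Sum>k\<in>UNIV. of_real (L i k t) * z k) + of_real c * z i"
proof -
  have "of_real (Lc i k t) * z k = of_real (L i k t) * z k + (if k = i then of_real c * z i else 0)" for k
    by (auto simp: Lc_def algebra_simps)
  then show ?thesis by (simp add: sum.distrib)
qed

lemma continuous_on_Lc_sum:
  assumes "continuous_on UNIV h"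
  shows "continuous_on UNIV (\<lambda>\<tau>. \<Sum>k\<in>UNIV. complex_of_real (Lc i k \<tau>) * h \<tau> $ k)"
proof -
  have "continuous_on UNIV (\<lambda>\<tau>. h \<tau> $ k)" for k
    by (rule continuous_on_component[OF assms])
  then show ?thesis by (intro continuous_on_sum continuous_on_mult continuous_on_of_real Lc_cont)
qed

text \<open>Write \<open>u = R\<^sub>r ((L + c) u) + R\<^sub>r e\<close>; the supersolution inequality gives
  \<open>e \<ge> (Re \<mu> - \<sigma>) a\<close>, and \<open>q\<close> is chosen so that \<open>(1 - q) u \<le> R\<^sub>r ((Re \<mu> - \<sigma>) a)\<close>.\<close>
lemma weight_contraction:
  "periodic_resolvent T r (\<lambda>\<tau>. \<Sum>k\<in>UNIV. Lc i k \<tau> * u k \<tau>) t \<le> q * u i t"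
proof -
  let ?S = "\<lambda>\<tau>. \<Sum>k\<in>UNIV. Lc i k \<tau> * u k \<tau>"
  let ?e = "\<lambda>\<tau>. u' i \<tau> - (\<Sum>k\<in>UNIV. L i k \<tau> * u k \<tau>) + Re \<mu> * u i \<tau>"
  have S_cont: "continuous_on UNIV ?S" by (intro continuous_intros Lc_cont u_cont)
  have e_cont: "continuous_on UNIV ?e" by (intro continuous_intros u'_cont L_cont u_cont)
  have "u i t = periodic_resolvent T r (\<lambda>\<tau>. ?S \<tau> + ?e \<tau>) t"
  proof (rule periodic_resolvent_unique[OF T_pos nondeg_r])
    show "(u i has_vector_derivative u' i \<tau>) (at \<tau>)" for \<tau>
      using u_deriv by (simp add: has_real_derivative_iff_has_vector_derivative)
    show "u' i \<tau> + r * u i \<tau> = ?S \<tau> + ?e \<tau>" for \<tau>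
      using sum_Lc[where i=i and t=\<tau> and z="\<lambda>k. u k \<tau>"] by (simp add: r_def algebra_simps)
  qed (rule u_periodic)
  then have u_eq: "u i t = periodic_resolvent T r ?S t + periodic_resolvent T r ?e t"
    by (simp add: periodic_resolvent_add[OF S_cont e_cont])
  have "(Re \<mu> - \<sigma>) * a \<le> ?e \<tau>" for \<tau>
  proof -
    have "(Re \<mu> - \<sigma>) * a \<le> (Re \<mu> - \<sigma>) * u i \<tau>"
      using mu_gt u_lower[of i \<tau>] by (intro mult_left_mono) auto
    then show ?thesis using supersolution[of i \<tau>] by (simp add: algebra_simps)
  qed
  then have "periodic_resolvent T r (\<lambda>_. (Re \<mu> - \<sigma>) * a) t \<le> periodic_resolvent T r ?e t"
    by (intro periodic_resolvent_mono T_pos r_pos e_cont continuous_on_const)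
  then have "(Re \<mu> - \<sigma>) * a / r \<le> periodic_resolvent T r ?e t"
    by (simp add: periodic_resolvent_const[OF T_pos r_pos])
  moreover have "(1 - q) * u i t \<le> (Re \<mu> - \<sigma>) * a / r"
  proof -
    have "1 - q \<le> (Re \<mu> - \<sigma>) * a / (r * M)"
      by (simp add: q_def)
    moreover have "0 \<le> 1 - q" "0 \<le> u i t"
      using q_bounds a_pos u_lower[of i t] by auto
    ultimately have "(1 - q) * u i t \<le> ((Re \<mu> - \<sigma>) * a / (r * M)) * M"
      using u_upper[of i t] by (intro mult_mono) auto
    also have "\<dots> = (Re \<mu> - \<sigma>) * a / r" using M_pos by simp
    finally show ?thesis .
  qed
  ultimately show ?thesis using u_eq unfolding left_diff_distrib by linarith
qed

lemma norm_Bop_le: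
  assumes h: "continuous_on UNIV h" and bound: "\<And>k \<tau>. norm (h \<tau> $ k) \<le> K * u k \<tau>"
  shows "norm (Bop h t $ i) \<le> K * q * u i t"
proof -
  have "0 \<le> K * u i t" using bound[of t i] norm_ge_zero order_trans by blast
  then have K: "K \<ge> 0" using a_pos u_lower[of i t] by (simp add: zero_le_mult_iff)
  let ?H = "\<lambda>\<tau>. \<Sum>k\<in>UNIV. complex_of_real (Lc i k \<tau>) * h \<tau> $ k"
  let ?S = "\<lambda>\<tau>. \<Sum>k\<in>UNIV. Lc i k \<tau> * u k \<tau>"
  have H_le: "norm (?H \<tau>) \<le> K * ?S \<tau>" for \<tau>
  proof -
    have "norm (?H \<tau>) \<le> (\<Sum>k\<in>UNIV. norm (complex_of_real (Lc i k \<tau>) * h \<tau> $ k))"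
      by (rule norm_sum)
    also have "\<dots> = (\<Sum>k\<in>UNIV. Lc i k \<tau> * norm (h \<tau> $ k))"
      using Lc_nonneg by (simp add: norm_mult)
    also have "\<dots> \<le> (\<Sum>k\<in>UNIV. Lc i k \<tau> * (K * u k \<tau>))"
      by (intro sum_mono mult_left_mono bound Lc_nonneg)
    also have "\<dots> = K * ?S \<tau>"
      by (simp add: sum_distrib_left algebra_simps)
    finally show ?thesis .
  qed
  have "norm (Bop h t $ i) \<le> periodic_resolvent T r (\<lambda>\<tau>. norm (?H \<tau>)) t"
    using norm_periodic_resolvent_le[where \<nu>=\<nu>, OF T_pos _ continuous_on_Lc_sum[OF h]]
    by (simp add: Bop_def Re_nu r_pos)
  also have "\<dots> \<le> periodic_resolvent T r (\<lambda>\<tau>. K * ?S \<tau>) t"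
  proof (rule periodic_resolvent_mono[OF T_pos r_pos _ _ H_le])
    show "continuous_on UNIV (\<lambda>\<tau>. norm (?H \<tau>))"
      by (rule continuous_on_norm[OF continuous_on_Lc_sum[OF h]])
    show "continuous_on UNIV (\<lambda>\<tau>. K * ?S \<tau>)"
      by (intro continuous_intros Lc_cont u_cont)
  qed
  also have "\<dots> = K * periodic_resolvent T r ?S t" by (rule periodic_resolvent_cmult)
  also have "\<dots> \<le> K * (q * u i t)" by (rule mult_left_mono[OF weight_contraction K])
  finally show ?thesis by (simp add: mult.assoc)
qed

lemma norm_Bop_le_sup:
  assumes h: "continuous_on UNIV h" and bound: "\<And>\<tau>. norm (h \<tau>) \<le> e"
  shows "norm (Bop h t $ i) \<le> e * M / a"
proof -
  have e: "e \<ge> 0" using bound[of 0] norm_ge_zero order_trans by blast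
  have "norm (Bop h t $ i) \<le> (e / a) * q * u i t"
    by (rule norm_Bop_le[OF h]) (rule weighted_le_of_norm_le[OF bound])
  also have "\<dots> \<le> (e / a) * 1 * M"
    using e a_pos q_bounds u_upper[of i t] u_lower[of i t] by (intro mult_mono) auto
  finally show ?thesis by simp
qed

lemma Bop_Xode:
  assumes "h \<in> Xode T"
  shows "Bop h \<in> Xode T"
proof -
  have h: "continuous_on UNIV h" and h_per: "\<And>t. h (t + T) = h t"
    using assms by (auto simp: Xode_def)
  let ?H = "\<lambda>i \<tau>. \<Sum>k\<in>UNIV. complex_of_real (Lc i k \<tau>) * h \<tau> $ k"
  have per: "?H i (t + T) = ?H i t" for i t
    by (simp add: Lc_periodic h_per)
  have "continuous_on UNIV (periodic_resolvent T \<nu> (?H i))" for i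
    by (rule continuous_on_periodic_resolvent[where h="?H i", OF T_pos nondeg_nu continuous_on_Lc_sum[OF h] per])
  moreover have "periodic_resolvent T \<nu> (?H i) (t + T) = periodic_resolvent T \<nu> (?H i) t" for i t
    by (rule periodic_resolvent_periodic[where h="?H i", OF per])
  ultimately show ?thesis
    unfolding Xode_def Bop_def by (auto intro: continuous_on_vec_lambda)
qed

lemma Rop_Xode:
  assumes "\<psi> \<in> Xode T"
  shows "Rop \<psi> \<in> Xode T"
proof -
  have \<psi>: "continuous_on UNIV \<psi>" and per: "\<And>t. \<psi> (t + T) $ i = \<psi> t $ i" for i
    using assms by (auto simp: Xode_def)
  have "continuous_on UNIV (periodic_resolvent T \<nu> (\<lambda>\<tau>. \<psi> \<tau> $ i))" for i
    by (rule continuous_on_periodic_resolvent[where h="\<lambda>\<tau>. \<psi> \<tau> $ i", OF T_pos nondeg_nu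
          continuous_on_component[OF \<psi>] per])
  moreover have "periodic_resolvent T \<nu> (\<lambda>\<tau>. \<psi> \<tau> $ i) (t + T) = periodic_resolvent T \<nu> (\<lambda>\<tau>. \<psi> \<tau> $ i) t"
    for i t
    by (rule periodic_resolvent_periodic[where h="\<lambda>\<tau>. \<psi> \<tau> $ i", OF per])
  ultimately show ?thesis
    unfolding Xode_def Rop_def by (auto intro: continuous_on_vec_lambda)
qed

lemma Bop_diff:
  assumes "continuous_on UNIV h1" and "continuous_on UNIV h2"
  shows "Bop (\<lambda>t. h1 t - h2 t) t = Bop h1 t - Bop h2 t"
proof -
  have "(\<lambda>\<tau>. \<Sum>k\<in>UNIV. complex_of_real (Lc i k \<tau>) * (h1 \<tau> - h2 \<tau>) $ k) =
        (\<lambda>\<tau>. (\<Sum>k\<in>UNIV. complex_of_real (Lc i k \<tau>) * h1 \<tau> $ k) -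
              (\<Sum>k\<in>UNIV. complex_of_real (Lc i k \<tau>) * h2 \<tau> $ k))" for i
    by (simp add: right_diff_distrib sum_subtractf)
  then show ?thesis using assms
    by (simp add: Bop_def vec_eq_iff periodic_resolvent_diff continuous_on_Lc_sum)
qed

lemma Bop_sum:
  fixes n :: nat
  assumes "\<And>j. continuous_on UNIV (f j)"
  shows "Bop (\<lambda>t. \<Sum>j<n. f j t) t = (\<Sum>j<n. Bop (f j) t)"
proof -
  have "(\<lambda>\<tau>. \<Sum>k\<in>UNIV. complex_of_real (Lc i k \<tau>) * (\<Sum>j<n. f j \<tau>) $ k) =
        (\<lambda>\<tau>. \<Sum>j<n. \<Sum>k\<in>UNIV. complex_of_real (Lc i k \<tau>) * f j \<tau> $ k)" for i
    by (simp add: sum_component sum_distrib_left sum.swap[of _ "{..<n}"])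
  moreover have "periodic_resolvent T \<nu> (\<lambda>\<tau>. \<Sum>j<n. \<Sum>k\<in>UNIV. complex_of_real (Lc i k \<tau>) * f j \<tau> $ k) t =
     (\<Sum>j<n. periodic_resolvent T \<nu> (\<lambda>\<tau>. \<Sum>k\<in>UNIV. complex_of_real (Lc i k \<tau>) * f j \<tau> $ k) t)" for i
    by (rule periodic_resolvent_sum) (simp_all add: continuous_on_Lc_sum assms)
  ultimately show ?thesis
    by (simp add: Bop_def vec_eq_iff sum_component)
qed

lemma tendsto_Bop:
  assumes f: "\<And>N. continuous_on UNIV (f N)" and g: "continuous_on UNIV g"
    and lim: "uniform_limit UNIV f g sequentially"
  shows "(\<lambda>N. Bop (f N) t) \<longlonglongrightarrow> Bop g t"
proof (rule tendstoI)
  fix \<epsilon> :: real assume \<epsilon>: "\<epsilon> > 0"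
  define \<delta> where "\<delta> = \<epsilon> * a / (2 * (real CARD('m) * M))"
  have \<delta>: "\<delta> > 0" using \<epsilon> a_pos M_pos by (simp add: \<delta>_def)
  show "\<forall>\<^sub>F N in sequentially. dist (Bop (f N) t) (Bop g t) < \<epsilon>"
    using uniform_limitD[OF lim \<delta>]
  proof eventually_elim
    case (elim N)
    have close: "norm (g \<tau> - f N \<tau>) \<le> \<delta>" for \<tau>
      using elim by (auto simp: dist_norm norm_minus_commute intro: less_imp_le)
    have "dist (Bop (f N) t) (Bop g t) = norm (Bop (\<lambda>\<tau>. g \<tau> - f N \<tau>) t)"
      by (simp add: dist_norm Bop_diff[OF g f] norm_minus_commute)
    also have "\<dots> \<le> real CARD('m) * (\<delta> * M / a)"
      by (intro norm_vec_le_card_mult norm_Bop_le_sup[OF continuous_on_diff[OF g f] close])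
    also have "\<dots> = \<epsilon> / 2" using a_pos M_pos by (simp add: \<delta>_def field_simps)
    finally show ?case using \<epsilon> by simp
  qed
qed

lemma norm_Rop_le:
  assumes "continuous_on UNIV \<psi>" and "\<And>\<tau>. norm (\<psi> \<tau>) \<le> S"
  shows "norm (Rop \<psi> t $ i) \<le> S / r"
proof -
  have cont: "continuous_on UNIV (\<lambda>\<tau>. \<psi> \<tau> $ i)" by (rule continuous_on_component[OF assms(1)])
  have "norm (Rop \<psi> t $ i) \<le> periodic_resolvent T r (\<lambda>\<tau>. norm (\<psi> \<tau> $ i)) t"
    using norm_periodic_resolvent_le[where \<nu>=\<nu>, OF T_pos _ cont] by (simp add: Rop_def Re_nu r_pos)
  also have "\<dots> \<le> periodic_resolvent T r (\<lambda>_. S) t"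
  proof (rule periodic_resolvent_mono[OF T_pos r_pos continuous_on_norm[OF cont] continuous_on_const])
    show "norm (\<psi> \<tau> $ i) \<le> S" for \<tau>
      using Finite_Cartesian_Product.norm_nth_le[of "\<psi> \<tau>" i] assms(2)[of \<tau>] by linarith
  qed
  also have "\<dots> = S / r" by (rule periodic_resolvent_const[OF T_pos r_pos])
  finally show ?thesis .
qed

lemma ode_op_image_Xode:
  assumes "\<phi> \<in> Dode T"
  shows "(\<lambda>t. cscale \<mu> (\<phi> t) - ode_op L \<phi> t) \<in> Xode T"
proof -
  obtain \<phi>' where \<phi>': "\<phi>' \<in> Xode T" and deriv: "\<And>t. (\<phi> has_vector_derivative \<phi>' t) (at t)"
    using assms by (auto simp: Dode_def)
  have \<phi>: "\<phi> \<in> Xode T" using assms by (simp add: Dode_def)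
  have "(\<lambda>t. cscale \<mu> (\<phi> t) - ode_op L \<phi> t) =
      (\<lambda>t. \<chi> i. \<mu> * \<phi> t $ i + \<phi>' t $ i - (\<Sum>k\<in>UNIV. complex_of_real (L i k t) * \<phi> t $ k))"
    by (simp add: fun_eq_iff vec_eq_iff ode_op_component[OF deriv])
  moreover have "continuous_on UNIV (\<lambda>t. \<phi> t $ k)" "continuous_on UNIV (\<lambda>t. \<phi>' t $ k)" for k
    using \<phi> \<phi>' by (simp_all add: Xode_def continuous_on_component)
  ultimately show ?thesis
    using \<phi> \<phi>' unfolding Xode_def
    by (auto intro!: continuous_on_vec_lambda continuous_on_sum continuous_on_mult continuous_on_diff
        continuous_on_add continuous_on_of_real continuous_on_const L_cont simp: L_periodic)
qed

lemma fixed_point_of_solution: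
  assumes "\<phi> \<in> Dode T"
  shows "\<phi> t = Rop (\<lambda>t. cscale \<mu> (\<phi> t) - ode_op L \<phi> t) t + Bop \<phi> t"
proof -
  define \<psi> where "\<psi> = (\<lambda>t. cscale \<mu> (\<phi> t) - ode_op L \<phi> t)"
  obtain \<phi>' where deriv: "\<And>t. (\<phi> has_vector_derivative \<phi>' t) (at t)"
    using assms by (auto simp: Dode_def)
  have \<phi>: "continuous_on UNIV \<phi>" and per: "\<And>t. \<phi> (t + T) = \<phi> t"
    using assms by (auto simp: Dode_def Xode_def)
  have "continuous_on UNIV \<psi>"
    using ode_op_image_Xode[OF assms] by (simp add: \<psi>_def Xode_def)
  then have \<psi>: "continuous_on UNIV (\<lambda>\<tau>. \<psi> \<tau> $ i)" for i
    by (rule continuous_on_component)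
  have "\<phi> t $ i = periodic_resolvent T \<nu>
      (\<lambda>\<tau>. \<psi> \<tau> $ i + (\<Sum>k\<in>UNIV. complex_of_real (Lc i k \<tau>) * \<phi> \<tau> $ k)) t" for i
  proof (rule periodic_resolvent_unique[OF T_pos nondeg_nu])
    show "((\<lambda>t. \<phi> t $ i) has_vector_derivative \<phi>' t $ i) (at t)" for t
      by (rule has_vector_derivative_vec_nth[OF deriv])
    show "\<phi>' t $ i + \<nu> * \<phi> t $ i = \<psi> t $ i + (\<Sum>k\<in>UNIV. complex_of_real (Lc i k t) * \<phi> t $ k)" for t
      using sum_Lc[where i=i and t=t and z="\<lambda>k. \<phi> t $ k"]
      by (simp add: \<psi>_def ode_op_component[OF deriv] \<nu>_def algebra_simps)
  qed (simp add: per)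
  then show ?thesis
    by (simp add: vec_eq_iff Rop_def Bop_def \<psi>_def[symmetric]
        periodic_resolvent_add[OF \<psi> continuous_on_Lc_sum[OF \<phi>]])
qed

lemma solution_of_fixed_point:
  assumes \<psi>: "\<psi> \<in> Xode T" and \<phi>: "continuous_on UNIV \<phi>" and per: "\<And>t. \<phi> (t + T) = \<phi> t"
    and fixed: "\<And>t. \<phi> t = Rop \<psi> t + Bop \<phi> t"
  shows "\<phi> \<in> Dode T" and "cscale \<mu> (\<phi> t) - ode_op L \<phi> t = \<psi> t"
proof -
  have \<psi>_cont: "continuous_on UNIV (\<lambda>\<tau>. \<psi> \<tau> $ i)" and \<psi>_per: "\<And>t. \<psi> (t + T) = \<psi> t" for i
    using \<psi> by (auto simp: Xode_def intro: continuous_on_component)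
  define f where "f i \<tau> = \<psi> \<tau> $ i + (\<Sum>k\<in>UNIV. complex_of_real (Lc i k \<tau>) * \<phi> \<tau> $ k)" for i \<tau>
  have f_cont: "continuous_on UNIV (f i)" for i
    unfolding f_def by (intro continuous_on_add \<psi>_cont continuous_on_Lc_sum \<phi>)
  have f_per: "f i (\<tau> + T) = f i \<tau>" for i \<tau> by (simp add: f_def \<psi>_per per Lc_periodic)
  have \<phi>_eq: "\<phi> t $ i = periodic_resolvent T \<nu> (f i) t" for t i
    using fixed[of t] unfolding f_def
    by (simp add: Rop_def Bop_def periodic_resolvent_add[OF \<psi>_cont continuous_on_Lc_sum[OF \<phi>]])
  define \<phi>' where "\<phi>' t = (\<chi> i. f i t - \<nu> * \<phi> t $ i)" for t
  have deriv: "(\<phi> has_vector_derivative \<phi>' t) (at t)" for t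
  proof -
    have "(periodic_resolvent T \<nu> (f i) has_vector_derivative
        f i t - \<nu> * periodic_resolvent T \<nu> (f i) t) (at t)" for i
      by (rule periodic_resolvent_has_vector_derivative[OF T_pos nondeg_nu f_cont]) (rule f_per)
    then have "((\<lambda>t. \<chi> i. periodic_resolvent T \<nu> (f i) t) has_vector_derivative
        (\<chi> i. f i t - \<nu> * periodic_resolvent T \<nu> (f i) t)) (at t)"
      by (rule has_vector_derivative_vec_lambda)
    moreover have "(\<lambda>t. \<chi> i. periodic_resolvent T \<nu> (f i) t) = \<phi>"
      by (simp add: fun_eq_iff vec_eq_iff \<phi>_eq)
    ultimately show ?thesis by (simp add: \<phi>'_def \<phi>_eq)
  qed
  have "\<phi>' \<in> Xode T"
    unfolding Xode_def \<phi>'_def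
    by (auto intro!: continuous_on_vec_lambda continuous_on_diff continuous_on_mult
        continuous_on_const continuous_on_component f_cont \<phi> simp: f_per per)
  then show "\<phi> \<in> Dode T"
    using \<phi> per deriv by (auto simp: Dode_def Xode_def)
  have "(cscale \<mu> (\<phi> t) - ode_op L \<phi> t) $ i = \<psi> t $ i" for i
    using sum_Lc[where i=i and t=t and z="\<lambda>k. \<phi> t $ k"]
    by (simp add: ode_op_component[OF deriv] \<phi>'_def f_def \<nu>_def algebra_simps)
  then show "cscale \<mu> (\<phi> t) - ode_op L \<phi> t = \<psi> t" by (simp add: vec_eq_iff)
qed

lemma weighted_bound_of_solution:
  assumes \<phi>: "\<phi> \<in> Dode T" and S: "\<And>t. norm (cscale \<mu> (\<phi> t) - ode_op L \<phi> t) \<le> S"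
  shows "norm (\<phi> t $ i) \<le> S / (r * a * (1 - q)) * u i t"
proof -
  define \<psi> where "\<psi> = (\<lambda>t. cscale \<mu> (\<phi> t) - ode_op L \<phi> t)"
  have \<psi>_cont: "continuous_on UNIV \<psi>"
    using ode_op_image_Xode[OF \<phi>] by (simp add: \<psi>_def Xode_def)
  have \<phi>_cont: "continuous_on UNIV \<phi>" using \<phi> by (simp add: Dode_def Xode_def)
  obtain B where "\<And>t. norm (\<phi> t) \<le> B" using \<phi> Xode_bounded[OF T_pos] by (auto simp: Dode_def)
  then have "norm (\<phi> t $ i) \<le> (S / r) / (a * (1 - q)) * u i t"
  proof (rule weighted_sup_bound[OF a_pos u_lower _ q_bounds(1)])
    have "0 \<le> S" using S[of 0] norm_ge_zero order_trans by blast
    then show "0 \<le> S / r" using r_pos by simp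
    fix K i t assume "\<And>k \<tau>. norm (\<phi> \<tau> $ k) \<le> K * u k \<tau>"
    from norm_Bop_le[OF \<phi>_cont this] have "norm (Bop \<phi> t $ i) \<le> q * K * u i t"
      by (simp only: mult.commute mult.left_commute)
    moreover have "norm (Rop \<psi> t $ i) \<le> S / r"
      using \<psi>_cont S by (intro norm_Rop_le) (auto simp: \<psi>_def)
    moreover have "\<phi> t $ i = Rop \<psi> t $ i + Bop \<phi> t $ i"
      using fixed_point_of_solution[OF \<phi>, of t] by (simp add: \<psi>_def)
    then have "norm (\<phi> t $ i) \<le> norm (Rop \<psi> t $ i) + norm (Bop \<phi> t $ i)"
      by (simp only: norm_triangle_ineq)
    ultimately show "norm (\<phi> t $ i) \<le> S / r + q * K * u i t"
      by linarith
  qed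
  then show ?thesis by (simp add: divide_divide_eq_left mult.commute mult.left_commute)
qed

lemma resolvent_estimate:
  "\<exists>C. \<forall>\<phi>\<in>Dode T. supn UNIV \<phi> \<le> C * supn UNIV (\<lambda>t. cscale \<mu> (\<phi> t) - ode_op L \<phi> t)"
proof (intro exI[where x="real CARD('m) * M / (r * a * (1 - q))"] ballI)
  fix \<phi> :: "real \<Rightarrow> complex^'m" assume \<phi>: "\<phi> \<in> Dode T"
  define \<psi> where "\<psi> = (\<lambda>t. cscale \<mu> (\<phi> t) - ode_op L \<phi> t)"
  define S where "S = supn UNIV \<psi>"
  obtain B where "\<And>t. norm (\<psi> t) \<le> B"
    using Xode_bounded[OF T_pos ode_op_image_Xode[OF \<phi>]] by (auto simp: \<psi>_def)
  then have \<psi>_le: "norm (\<psi> t) \<le> S" for t unfolding S_def by (rule norm_le_supn)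
  have "0 \<le> S" using \<psi>_le[of 0] norm_ge_zero order_trans by blast
  then have "0 \<le> S / (r * a * (1 - q))" using r_pos a_pos q_bounds by simp
  then have "norm (\<phi> t $ i) \<le> S / (r * a * (1 - q)) * M" for t i
    using weighted_bound_of_solution[OF \<phi> \<psi>_le[unfolded \<psi>_def], of t i] u_upper[of i t]
    by (meson mult_left_mono order_trans)
  then have "norm (\<phi> t) \<le> real CARD('m) * (S / (r * a * (1 - q)) * M)" for t
    by (rule norm_vec_le_card_mult)
  then show "supn UNIV \<phi> \<le> real CARD('m) * M / (r * a * (1 - q)) * supn UNIV \<psi>"
    unfolding S_def[symmetric] by (intro supn_le) (simp add: field_simps)
qed

lemma Bop_power_bound:
  assumes "h \<in> Xode T" and "\<And>k \<tau>. norm (h \<tau> $ k) \<le> K * u k \<tau>"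
  shows "(Bop ^^ n) h \<in> Xode T \<and> (\<forall>k \<tau>. norm ((Bop ^^ n) h \<tau> $ k) \<le> K * q ^ n * u k \<tau>)"
proof (induction n)
  case (Suc n)
  then have X: "(Bop ^^ n) h \<in> Xode T"
    and bound: "\<And>k \<tau>. norm ((Bop ^^ n) h \<tau> $ k) \<le> K * q ^ n * u k \<tau>" by auto
  have "norm (Bop ((Bop ^^ n) h) \<tau> $ k) \<le> K * q ^ Suc n * u k \<tau>" for k \<tau>
    using norm_Bop_le[OF _ bound] X by (simp add: Xode_def algebra_simps)
  then show ?case using Bop_Xode[OF X] by simp
qed (use assms in simp)

lemma Bop_power_norm_le:
  assumes h0: "h0 \<in> Xode T"
  obtains C where "\<And>n. (Bop ^^ n) h0 \<in> Xode T" and "\<And>n \<tau>. norm ((Bop ^^ n) h0 \<tau>) \<le> C * q ^ n"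
proof -
  obtain B where B: "\<And>t. norm (h0 t) \<le> B" using Xode_bounded[OF T_pos h0] by blast
  have B_nonneg: "B \<ge> 0" using B[of 0] norm_ge_zero order_trans by blast
  have "norm (h0 \<tau> $ k) \<le> B / a * u k \<tau>" for k \<tau> by (rule weighted_le_of_norm_le[OF B])
  note iterates = Bop_power_bound[OF h0 this]
  have "norm ((Bop ^^ n) h0 \<tau> $ k) \<le> B / a * M * q ^ n" for n \<tau> k
  proof -
    have "norm ((Bop ^^ n) h0 \<tau> $ k) \<le> B / a * q ^ n * u k \<tau>" using iterates by simp
    also have "\<dots> \<le> B / a * q ^ n * M"
      using B_nonneg a_pos q_bounds u_upper[of k \<tau>] by (intro mult_left_mono) auto
    finally show ?thesis by (simp add: algebra_simps)
  qed
  then have "norm ((Bop ^^ n) h0 \<tau>) \<le> real CARD('m) * (B / a * M) * q ^ n" for n \<tau>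
    using norm_vec_le_card_mult by (metis mult.assoc)
  with iterates show ?thesis using that by blast
qed

text \<open>The Neumann series \<open>\<Sum>\<^sub>n B\<^sup>n h\<^sub>0\<close> converges uniformly since \<open>|B\<^sup>n h\<^sub>0| \<le> C q\<^sup>n\<close>.\<close>
lemma Neumann_series_fixed_point:
  assumes h0: "h0 \<in> Xode T"
  obtains \<phi> where "continuous_on UNIV \<phi>" and "\<And>t. \<phi> (t + T) = \<phi> t"
    and "\<And>t. \<phi> t = h0 t + Bop \<phi> t"
proof -
  obtain C where iterates: "\<And>n. (Bop ^^ n) h0 \<in> Xode T"
    and hs_le: "\<And>n \<tau>. norm ((Bop ^^ n) h0 \<tau>) \<le> C * q ^ n"
    by (rule Bop_power_norm_le[OF h0]) blast
  define hs where "hs n = (Bop ^^ n) h0" for n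
  have hs_cont: "continuous_on UNIV (hs n)" and hs_per: "hs n (t + T) = hs n t" for n t
    using iterates[of n] by (auto simp: hs_def Xode_def)
  have summable: "summable (\<lambda>n. C * q ^ n)"
    using q_bounds by (intro summable_mult summable_geometric) auto
  define \<phi> where "\<phi> \<tau> = (\<Sum>n. hs n \<tau>)" for \<tau>
  define SN where "SN N \<tau> = (\<Sum>n<N. hs n \<tau>)" for N \<tau>
  have lim: "uniform_limit UNIV SN \<phi> sequentially"
    unfolding \<phi>_def SN_def by (rule Weierstrass_m_test[OF _ summable]) (simp add: hs_def hs_le)
  have SN_cont: "continuous_on UNIV (SN N)" for N unfolding SN_def by (intro continuous_on_sum hs_cont)
  have \<phi>_cont: "continuous_on UNIV \<phi>"
    by (rule uniform_limit_theorem[OF _ lim]) (auto intro!: always_eventually SN_cont)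
  have "\<phi> t = h0 t + Bop \<phi> t" for t
  proof -
    have "Bop (SN N) t = SN (Suc N) t - h0 t" for N
      unfolding SN_def Bop_sum[OF hs_cont] sum.lessThan_Suc_shift by (simp add: hs_def)
    moreover have "(\<lambda>N. SN (Suc N) t) \<longlonglongrightarrow> \<phi> t"
      unfolding SN_def \<phi>_def
      by (intro LIMSEQ_Suc summable_LIMSEQ summable_comparison_test[OF _ summable])
         (auto simp: hs_def hs_le)
    ultimately have "(\<lambda>N. Bop (SN N) t) \<longlonglongrightarrow> \<phi> t - h0 t"
      by (simp add: tendsto_diff)
    with tendsto_Bop[OF SN_cont \<phi>_cont lim] show ?thesis
      using LIMSEQ_unique by fastforce
  qed
  moreover have "\<phi> (t + T) = \<phi> t" for t by (simp add: \<phi>_def hs_per)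
  ultimately show ?thesis using that \<phi>_cont by blast
qed

lemma in_resolvent_ode_op: "in_resolvent UNIV (Xode T) (Dode T) (ode_op L) \<mu>"
proof -
  have "\<exists>\<phi>\<in>Dode T. \<forall>t. cscale \<mu> (\<phi> t) - ode_op L \<phi> t = \<psi> t" if \<psi>: "\<psi> \<in> Xode T" for \<psi>
  proof -
    obtain \<phi> where "continuous_on UNIV \<phi>" "\<And>t. \<phi> (t + T) = \<phi> t" "\<And>t. \<phi> t = Rop \<psi> t + Bop \<phi> t"
      using Neumann_series_fixed_point[OF Rop_Xode[OF \<psi>]] by blast
    from solution_of_fixed_point[OF \<psi> this] show ?thesis by blast
  qed
  then show ?thesis unfolding in_resolvent_def using resolvent_estimate by blast
qed

end

context periodic_supersolution
begin

lemma spectral_bound_ode_op_le: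
  "spectral_bound UNIV (Xode T) (Dode T :: (real \<Rightarrow> complex^'m) set) (ode_op L) \<le> ereal \<sigma>"
proof -
  have per: "(\<chi> i. L i i (t + T)) = (\<chi> i. L i i t)" for t by (simp add: L_periodic)
  have cont: "continuous_on UNIV (\<lambda>t. \<chi> i. L i i t)" by (intro continuous_on_vec_lambda L_cont)
  obtain B where B: "\<And>t. norm (\<chi> i. L i i t) \<le> B"
    using periodic_bounded[where f="\<lambda>t. \<chi> i. L i i t", OF T_pos per cont] by blast
  have L_diag: "\<bar>L i i t\<bar> \<le> B" for i t
    using component_le_norm_cart[of "\<chi> i. L i i t" i] B[of t] by simp
  have resolvent: "in_resolvent UNIV (Xode T) (Dode T :: (real \<Rightarrow> complex^'m) set) (ode_op L) \<mu>"
    if "Re \<mu> > \<sigma>" for \<mu>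
  proof -
    interpret supersolution_shift T L u u' \<sigma> a M \<mu> "B + \<bar>Re \<mu>\<bar> + 1"
    proof
      show "\<sigma> < Re \<mu>" by (rule that)
      show "0 \<le> L i i t + (B + \<bar>Re \<mu>\<bar> + 1)" for i t
        using L_diag[of i t] abs_ge_zero[of "Re \<mu>"] unfolding abs_le_iff by linarith
      show "0 < Re \<mu> + (B + \<bar>Re \<mu>\<bar> + 1)"
        using L_diag[of undefined 0] abs_ge_minus_self[of "Re \<mu>"] by linarith
    qed
    show ?thesis by (rule in_resolvent_ode_op)
  qed
  show ?thesis
    unfolding spectral_bound_def spectrum_op_def
  proof (rule SUP_least)
    fix \<mu> assume "\<mu> \<in> {\<mu>. \<not> in_resolvent UNIV (Xode T) (Dode T :: (real \<Rightarrow> complex^'m) set) (ode_op L) \<mu>}"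
    then have "\<not> Re \<mu> > \<sigma>" using resolvent by blast
    then show "ereal (Re \<mu>) \<le> ereal \<sigma>" by simp
  qed
qed

end


section \<open>A lower bound for the nonlocal term\<close>

lemma ex_pos_uniform_finite:
  fixes P :: "'i::finite \<Rightarrow> real \<Rightarrow> bool"
  assumes ex: "\<And>i. \<exists>c>0. P i c" and mono: "\<And>i c c'. P i c \<Longrightarrow> 0 < c' \<Longrightarrow> c' \<le> c \<Longrightarrow> P i c'"
  shows "\<exists>c>0. \<forall>i. P i c"
proof -
  obtain f where f: "\<And>i. f i > 0 \<and> P i (f i)" using ex by metis
  have "Min (range f) > 0" using f by (subst Min_gr_iff) auto
  moreover have "Min (range f) \<le> f i" for i by (rule Min_le) auto
  ultimately show ?thesis using f mono by blast
qed

lemma measure_lebesgue_open_pos: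
  fixes S :: "'a::euclidean_space set"
  assumes "open S" and "bounded S" and "w \<in> S"
  shows "measure lebesgue S > 0"
proof -
  obtain e where e: "e > 0" "ball w e \<subseteq> S" using assms open_contains_ball by blast
  have "measure lborel (ball w e) > 0" by (rule content_ball_pos[OF e(1)])
  also have "measure lborel (ball w e) = measure lebesgue (ball w e)" by simp
  also have "\<dots> \<le> measure lebesgue S"
    by (rule measure_mono_fmeasurable[OF e(2)]) (auto intro: lmeasurable_open assms)
  finally show ?thesis .
qed

lemma measure_inter_ball_uniform_lower_bound:
  fixes \<Omega> :: "'a::euclidean_space set"
  assumes \<Omega>: "open \<Omega>" "bounded \<Omega>" and \<rho>: "\<rho> > 0"
  obtains m where "m > 0" and "\<And>x. x \<in> closure \<Omega> \<Longrightarrow> m \<le> measure lebesgue (\<Omega> \<inter> ball x \<rho>)"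
proof -
  have K: "compact (closure \<Omega>)" using \<Omega>(2) by (simp add: compact_closure)
  obtain C where C: "C \<subseteq> closure \<Omega>" "finite C" "closure \<Omega> \<subseteq> (\<Union>z\<in>C. ball z (\<rho>/2))"
    using compactE_image[OF K, of "closure \<Omega>" "\<lambda>z. ball z (\<rho>/2)"] \<rho> by force
  have pos: "measure lebesgue (\<Omega> \<inter> ball z (\<rho>/2)) > 0" if z: "z \<in> closure \<Omega>" for z
  proof -
    have "\<exists>w\<in>\<Omega>. dist w z < \<rho>/2" using z \<rho> closure_approachable[of z \<Omega>] half_gt_zero by blast
    then obtain w where w: "w \<in> \<Omega>" "dist w z < \<rho>/2" by blast
    show ?thesis
      by (rule measure_lebesgue_open_pos[of _ w]) (use \<Omega> w in \<open>auto simp: dist_commute\<close>)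
  qed
  define m where "m = (if C = {} then 1 else Min ((\<lambda>z. measure lebesgue (\<Omega> \<inter> ball z (\<rho>/2))) ` C))"
  have "m > 0" unfolding m_def using C pos by (auto simp: Min_gr_iff)
  moreover have "m \<le> measure lebesgue (\<Omega> \<inter> ball x \<rho>)" if x: "x \<in> closure \<Omega>" for x
  proof -
    obtain z where z: "z \<in> C" "x \<in> ball z (\<rho>/2)" using C x by blast
    have "m \<le> measure lebesgue (\<Omega> \<inter> ball z (\<rho>/2))"
      unfolding m_def using z C by (auto intro: Min_le)
    also have "\<dots> \<le> measure lebesgue (\<Omega> \<inter> ball x \<rho>)"
    proof (rule measure_mono_fmeasurable)
      show "\<Omega> \<inter> ball z (\<rho> / 2) \<subseteq> \<Omega> \<inter> ball x \<rho>"
      proof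
        fix y assume "y \<in> \<Omega> \<inter> ball z (\<rho> / 2)"
        moreover have "dist x y \<le> dist x z + dist z y" by (rule dist_triangle)
        ultimately show "y \<in> \<Omega> \<inter> ball x \<rho>" using z by (auto simp: dist_commute)
      qed
      show "\<Omega> \<inter> ball z (\<rho> / 2) \<in> sets lebesgue"
        using \<Omega> by (intro fmeasurableD lmeasurable_open) auto
      show "\<Omega> \<inter> ball x \<rho> \<in> fmeasurable lebesgue"
        using \<Omega> by (intro lmeasurable_open) auto
    qed
    finally show ?thesis .
  qed
  ultimately show ?thesis using that by blast
qed

lemma kernel_lower_bound_near_diagonal:
  fixes J :: "'a::euclidean_space \<Rightarrow> 'a \<Rightarrow> real"
  assumes J_cont: "continuous_on UNIV (\<lambda>p. J (fst p) (snd p))" and J_diag: "\<And>x. J x x > 0"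
    and K: "compact K"
  obtains \<rho> \<beta> where "\<rho> > 0" and "\<beta> > 0" and "\<And>x y. x \<in> K \<Longrightarrow> dist x y < \<rho> \<Longrightarrow> \<beta> \<le> J x y"
proof (cases "K = {}")
  case True
  then show ?thesis using that[of 1 1] by simp
next
  case False
  have "continuous_on K (\<lambda>x. J x x)"
    using continuous_on_compose2[OF J_cont continuous_on_Pair[OF continuous_on_id continuous_on_id]]
    by auto
  then obtain x0 where x0: "\<And>x. x \<in> K \<Longrightarrow> J x0 x0 \<le> J x x"
    using continuous_attains_inf[OF K False] by blast
  define j0 where "j0 = J x0 x0"
  have j0: "j0 > 0" using J_diag by (simp add: j0_def)
  obtain R where R: "\<And>x. x \<in> K \<Longrightarrow> norm x \<le> R" using compact_imp_bounded[OF K] bounded_iff by blast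
  define S where "S = K \<times> cball (0::'a) (R + 1)"
  have "uniformly_continuous_on S (\<lambda>p. J (fst p) (snd p))"
    unfolding S_def
    by (intro compact_uniformly_continuous continuous_on_subset[OF J_cont] compact_Times K compact_cball)
       auto
  then obtain \<delta> where \<delta>: "\<delta> > 0" and close: "\<And>p p'. p \<in> S \<Longrightarrow> p' \<in> S \<Longrightarrow> dist p' p < \<delta> \<Longrightarrow>
      dist (J (fst p') (snd p')) (J (fst p) (snd p)) < j0 / 2"
    using j0 unfolding uniformly_continuous_on_def by (metis half_gt_zero)
  have "j0 / 2 \<le> J x y" if x: "x \<in> K" and xy: "dist x y < min \<delta> 1" for x y
  proof -
    have "norm y \<le> R + 1"
      using norm_triangle_ineq4[of x "x - y"] R[OF x] xy by (simp add: dist_norm)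
    then have "(x, y) \<in> S" "(x, x) \<in> S" unfolding S_def using x R[OF x] by auto
    moreover have "dist (x, y) (x, x) < \<delta>" using xy by (simp add: dist_Pair_Pair dist_commute)
    ultimately have "\<bar>J x y - J x x\<bar> < j0 / 2"
      using close[of "(x, x)" "(x, y)"] by (simp add: dist_real_def)
    moreover have "j0 \<le> J x x" using x0[OF x] by (simp add: j0_def)
    ultimately show ?thesis by linarith
  qed
  then show ?thesis using that[of "min \<delta> 1" "j0 / 2"] \<delta> j0 by simp
qed

lemma integrable_on_open_subset:
  fixes f :: "'a::euclidean_space \<Rightarrow> real"
  assumes S: "open S" "bounded S" and "S \<subseteq> K" and K: "compact K" and f: "continuous_on K f"
  shows "f integrable_on S"
proof -
  obtain B where B: "\<And>y. y \<in> f ` K \<Longrightarrow> norm y \<le> B"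
    using compact_imp_bounded[OF compact_continuous_image[OF f K]] bounded_iff by metis
  have S_meas: "S \<in> lmeasurable" using S by (rule lmeasurable_open[rotated])
  show ?thesis
  proof (rule measurable_bounded_by_integrable_imp_integrable)
    show "f \<in> borel_measurable (lebesgue_on S)"
      by (rule continuous_imp_measurable_on_sets_lebesgue[OF continuous_on_subset[OF f \<open>S \<subseteq> K\<close>]])
         (use S_meas in \<open>auto intro: fmeasurableD\<close>)
    show "(\<lambda>_. B) integrable_on S" by (rule integrable_on_const[OF S_meas])
    show "norm (f x) \<le> B" if "x \<in> S" for x using B \<open>S \<subseteq> K\<close> that by auto
    show "S \<in> sets lebesgue" using S_meas by (auto intro: fmeasurableD)
  qed
qed

lemma measure_mult_le_integral:
  fixes f :: "'a::euclidean_space \<Rightarrow> real"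
  assumes "B \<subseteq> S" and B: "B \<in> lmeasurable" and "f integrable_on B" and "f integrable_on S"
    and "\<And>y. y \<in> S \<Longrightarrow> 0 \<le> f y" and "\<And>y. y \<in> B \<Longrightarrow> c \<le> f y"
  shows "c * measure lebesgue B \<le> integral S f"
proof -
  have "c * measure lebesgue B = integral B (\<lambda>y. c *\<^sub>R 1)"
    by (subst integral_cmul) (simp add: lmeasure_integral[OF B])
  also have "\<dots> \<le> integral B f"
    using assms by (intro integral_le integrable_on_const[OF B]) auto
  also have "\<dots> \<le> integral S f"
    using assms by (intro integral_subset_le) auto
  finally show ?thesis .
qed

text \<open>\<open>J\<close> is bounded below near the diagonal, and every point of \<open>closure \<Omega>\<close> sees a part of \<open>\<Omega>\<close>
  of measure bounded below.\<close>
lemma nonlocal_integral_lower_bound: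
  fixes J :: "'a::euclidean_space \<Rightarrow> 'a \<Rightarrow> real"
  assumes \<Omega>: "open \<Omega>" "bounded \<Omega>"
    and J_cont: "continuous_on UNIV (\<lambda>p. J (fst p) (snd p))"
    and J_nonneg: "\<And>x y. J x y \<ge> 0" and J_diag: "\<And>x. J x x > 0"
  obtains c where "c > 0"
    and "\<And>x v b. x \<in> closure \<Omega> \<Longrightarrow> continuous_on (closure \<Omega>) v \<Longrightarrow> 0 \<le> b \<Longrightarrow>
           (\<And>y. y \<in> \<Omega> \<Longrightarrow> b \<le> v y) \<Longrightarrow> c * b \<le> integral \<Omega> (\<lambda>y. J x y * v y)"
proof -
  have K: "compact (closure \<Omega>)" using \<Omega> by (simp add: compact_closure)
  obtain \<rho> \<beta> where \<rho>: "\<rho> > 0" and \<beta>: "\<beta> > 0"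
    and J_ge: "\<And>x y. x \<in> closure \<Omega> \<Longrightarrow> dist x y < \<rho> \<Longrightarrow> \<beta> \<le> J x y"
    using kernel_lower_bound_near_diagonal[OF J_cont J_diag K] by blast
  obtain m where m: "m > 0" and m_le: "\<And>x. x \<in> closure \<Omega> \<Longrightarrow> m \<le> measure lebesgue (\<Omega> \<inter> ball x \<rho>)"
    using measure_inter_ball_uniform_lower_bound[OF \<Omega> \<rho>] by blast
  have "\<beta> * m * b \<le> integral \<Omega> (\<lambda>y. J x y * v y)"
    if x: "x \<in> closure \<Omega>" and v: "continuous_on (closure \<Omega>) v" and b: "0 \<le> b"
      and v_ge: "\<And>y. y \<in> \<Omega> \<Longrightarrow> b \<le> v y" for x v b
  proof -
    let ?f = "\<lambda>y. J x y * v y"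
    let ?B = "\<Omega> \<inter> ball x \<rho>"
    have "continuous_on (closure \<Omega>) (\<lambda>y. J x y)"
      using continuous_on_compose2[OF J_cont continuous_on_Pair[OF continuous_on_const continuous_on_id]]
      by auto
    then have f_cont: "continuous_on (closure \<Omega>) ?f" using v by (rule continuous_on_mult)
    have f_int: "?f integrable_on S" if "open S" "bounded S" "S \<subseteq> closure \<Omega>" for S
      using integrable_on_open_subset[OF that K f_cont] .
    have "\<beta> * m * b \<le> \<beta> * b * measure lebesgue ?B"
      using mult_left_mono[OF m_le[OF x], of "\<beta> * b"] \<beta> b by (simp add: ac_simps)
    also have "\<dots> \<le> integral \<Omega> ?f"
    proof (rule measure_mult_le_integral)
      show "?B \<in> lmeasurable" using \<Omega> by (intro lmeasurable_open) auto
      show "?f integrable_on ?B" "?f integrable_on \<Omega>"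
        using \<Omega> closure_subset by (auto intro!: f_int)
      show "0 \<le> ?f y" if "y \<in> \<Omega>" for y
        using J_nonneg[of x y] v_ge[OF that] b by simp
      show "\<beta> * b \<le> ?f y" if "y \<in> ?B" for y
        using J_ge[OF x, of y] v_ge[of y] that \<beta> b by (auto intro: mult_mono)
    qed auto
    finally show ?thesis .
  qed
  then show ?thesis using that[of "\<beta> * m"] \<beta> m by simp
qed

section \<open>The principal eigenfunction yields supersolutions of every \<open>P\<^sub>x\<close>\<close>

lemma continuous_on_Pair_slice1:
  assumes "continuous_on (A \<times> B) f" and "t \<in> B"
  shows "continuous_on A (\<lambda>y. f (y, t))"
  using continuous_on_compose2[OF assms(1) continuous_on_Pair[OF continuous_on_id continuous_on_const]]
    assms(2) by auto

lemma continuous_on_Pair_slice2: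
  assumes "continuous_on (A \<times> B) f" and "x \<in> A"
  shows "continuous_on B (\<lambda>t. f (x, t))"
  using continuous_on_compose2[OF assms(1) continuous_on_Pair[OF continuous_on_const continuous_on_id]]
    assms(2) by auto

locale periodic_eigenpair =
  fixes \<Omega> :: "(real^'n::finite) set" and T :: real and d :: "'m::finite \<Rightarrow> real"
    and J :: "'m \<Rightarrow> real^'n \<Rightarrow> real^'n \<Rightarrow> real" and l :: "'m \<Rightarrow> 'm \<Rightarrow> real^'n \<Rightarrow> real \<Rightarrow> real"
    and s :: real and \<phi> \<phi>' :: "(real^'n) \<times> real \<Rightarrow> complex^'m"
  assumes \<Omega>_open: "open \<Omega>" and \<Omega>_ne: "\<Omega> \<noteq> {}" and \<Omega>_bdd: "bounded \<Omega>"
    and T_pos: "T > 0" and d_pos: "\<And>i. d i > 0"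
    and J_cont: "\<And>i. continuous_on UNIV (\<lambda>p. J i (fst p) (snd p))"
    and J_nonneg: "\<And>i x y. J i x y \<ge> 0" and J_diag: "\<And>i x. J i x x > 0"
    and l_cont: "\<And>i k. continuous_on (closure \<Omega> \<times> UNIV) (\<lambda>p. l i k (fst p) (snd p))"
    and l_periodic: "\<And>i k x t. x \<in> closure \<Omega> \<Longrightarrow> l i k x (t + T) = l i k x t"
    and l_offdiag_nonneg: "\<And>i k x t. i \<noteq> k \<Longrightarrow> x \<in> closure \<Omega> \<Longrightarrow> l i k x t \<ge> 0"
    and \<phi>_cont: "continuous_on (closure \<Omega> \<times> UNIV) \<phi>"
    and \<phi>_periodic: "\<And>x t. x \<in> closure \<Omega> \<Longrightarrow> \<phi> (x, t + T) = \<phi> (x, t)"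
    and \<phi>'_cont: "continuous_on (closure \<Omega> \<times> UNIV) \<phi>'"
    and \<phi>_deriv: "\<And>x t. x \<in> closure \<Omega> \<Longrightarrow> ((\<lambda>s. \<phi> (x, s)) has_vector_derivative \<phi>' (x, t)) (at t)"
    and \<phi>_pos: "\<And>x t i. x \<in> closure \<Omega> \<Longrightarrow> Im (\<phi> (x, t) $ i) = 0 \<and> Re (\<phi> (x, t) $ i) > 0"
    and eigen: "\<And>x t. x \<in> closure \<Omega> \<Longrightarrow> Lop \<Omega> d J l \<phi> (x, t) = cscale (complex_of_real s) (\<phi> (x, t))"
begin

definition "U i x t = Re (\<phi> (x, t) $ i)"

lemma U_pos: "x \<in> closure \<Omega> \<Longrightarrow> U i x t > 0"
  using \<phi>_pos by (simp add: U_def)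

lemma \<phi>_eq_U: "x \<in> closure \<Omega> \<Longrightarrow> \<phi> (x, t) $ i = complex_of_real (U i x t)"
  using \<phi>_pos[of x t i] by (simp add: U_def complex_eq_iff)

lemma U_cont: "continuous_on (closure \<Omega> \<times> UNIV) (\<lambda>p. U i (fst p) (snd p))"
  unfolding U_def prod.collapse by (intro continuous_on_Re continuous_on_component \<phi>_cont)

lemma compact_closure_\<Omega>: "compact (closure \<Omega>)"
  using \<Omega>_bdd by (simp add: compact_closure)

lemma U_bounds:
  obtains a M where "a > 0" and "\<And>i x t. x \<in> closure \<Omega> \<Longrightarrow> a \<le> U i x t \<and> U i x t \<le> M"
proof -
  have \<Omega>_closure_ne: "closure \<Omega> \<noteq> {}" using \<Omega>_ne by simp
  have "\<exists>a>0. \<forall>i. \<forall>x\<in>closure \<Omega>. \<forall>t. a \<le> U i x t"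
  proof (rule ex_pos_uniform_finite)
    fix i
    obtain p where p: "p \<in> closure \<Omega> \<times> UNIV"
      and min: "\<And>x t. x \<in> closure \<Omega> \<Longrightarrow> U i (fst p) (snd p) \<le> U i x t"
      by (rule periodic_attains_inf[OF T_pos compact_closure_\<Omega> \<Omega>_closure_ne U_cont])
         (auto simp: U_def \<phi>_periodic)
    have "U i (fst p) (snd p) > 0" using p by (intro U_pos) auto
    with min show "\<exists>a>0. \<forall>x\<in>closure \<Omega>. \<forall>t. a \<le> U i x t" by blast
  qed (use order_trans in blast)
  then obtain a where a: "a > 0" "\<And>i x t. x \<in> closure \<Omega> \<Longrightarrow> a \<le> U i x t" by blast
  have "continuous_on (closure \<Omega> \<times> UNIV) (\<lambda>p. - norm (\<phi> p))" by (intro continuous_intros \<phi>_cont)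
  then obtain p where p: "\<And>x t. x \<in> closure \<Omega> \<Longrightarrow> - norm (\<phi> p) \<le> - norm (\<phi> (x, t))"
    by (rule periodic_attains_inf[OF T_pos compact_closure_\<Omega> \<Omega>_closure_ne]) (auto simp: \<phi>_periodic)
  have "U i x t \<le> norm (\<phi> p)" if "x \<in> closure \<Omega>" for i x t
  proof -
    have "U i x t \<le> norm (\<phi> (x, t) $ i)" unfolding U_def by (rule complex_Re_le_cmod)
    also have "\<dots> \<le> norm (\<phi> (x, t))" by (rule Finite_Cartesian_Product.norm_nth_le)
    also have "\<dots> \<le> norm (\<phi> p)" using p[OF that] by simp
    finally show ?thesis .
  qed
  with a show ?thesis using that by blast
qed

lemma integrable_J_U: "(\<lambda>y. J i x y * U i y t) integrable_on \<Omega>"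
proof -
  have "continuous_on UNIV (\<lambda>y. J i x y)"
    using continuous_on_Pair_slice2[of UNIV UNIV "\<lambda>p. J i (fst p) (snd p)" x] J_cont by simp
  then have "continuous_on (closure \<Omega>) (\<lambda>y. J i x y)" by (rule continuous_on_subset) simp
  moreover have "continuous_on (closure \<Omega>) (\<lambda>y. U i y t)"
    using continuous_on_Pair_slice1[OF U_cont UNIV_I] by simp
  ultimately show ?thesis
    by (intro integrable_on_open_subset[OF \<Omega>_open \<Omega>_bdd closure_subset compact_closure_\<Omega>]
        continuous_on_mult)
qed

lemma nonlocal_term_dominates_component:
  assumes a: "a > 0" and U_le: "\<And>i x t. x \<in> closure \<Omega> \<Longrightarrow> a \<le> U i x t \<and> U i x t \<le> M"
  shows "\<exists>\<gamma>>0. \<forall>x\<in>closure \<Omega>. \<forall>t. \<gamma> * U i x t \<le> d i * integral \<Omega> (\<lambda>y. J i x y * U i y t)"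
proof -
  obtain x0 where "x0 \<in> closure \<Omega>" using \<Omega>_ne closure_subset by blast
  then have M: "M > 0" using a U_le[of x0 undefined 0] by linarith
  obtain c where c: "c > 0" and c_le: "\<And>x v b. x \<in> closure \<Omega> \<Longrightarrow> continuous_on (closure \<Omega>) v \<Longrightarrow>
      0 \<le> b \<Longrightarrow> (\<And>y. y \<in> \<Omega> \<Longrightarrow> b \<le> v y) \<Longrightarrow> c * b \<le> integral \<Omega> (\<lambda>y. J i x y * v y)"
    by (rule nonlocal_integral_lower_bound[OF \<Omega>_open \<Omega>_bdd J_cont J_nonneg J_diag]) blast
  have "d i * c * a / M * U i x t \<le> d i * integral \<Omega> (\<lambda>y. J i x y * U i y t)"
    if x: "x \<in> closure \<Omega>" for x t
  proof -
    have "d i * c * a / M * U i x t \<le> d i * c * a / M * M"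
      using U_le[OF x] d_pos[of i] c a M by (intro mult_left_mono) auto
    also have "\<dots> = d i * (c * a)" using M by simp
    also have "\<dots> \<le> d i * integral \<Omega> (\<lambda>y. J i x y * U i y t)"
    proof (rule mult_left_mono)
      show "c * a \<le> integral \<Omega> (\<lambda>y. J i x y * U i y t)"
      proof (rule c_le[OF x _ less_imp_le[OF a]])
        show "continuous_on (closure \<Omega>) (\<lambda>y. U i y t)"
          using continuous_on_Pair_slice1[OF U_cont UNIV_I] by simp
        show "a \<le> U i y t" if "y \<in> \<Omega>" for y
          using U_le[of y] closure_subset that by blast
      qed
    qed (use d_pos[of i] in simp)
    finally show ?thesis .
  qed
  moreover have "d i * c * a / M > 0" using d_pos[of i] c a M by simp
  ultimately show ?thesis by blast
qed

lemma nonlocal_term_dominates: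
  obtains \<gamma> where "\<gamma> > 0"
    and "\<And>i x t. x \<in> closure \<Omega> \<Longrightarrow> \<gamma> * U i x t \<le> d i * integral \<Omega> (\<lambda>y. J i x y * U i y t)"
proof -
  obtain a M where a: "a > 0" and U_le: "\<And>i x t. x \<in> closure \<Omega> \<Longrightarrow> a \<le> U i x t \<and> U i x t \<le> M"
    by (rule U_bounds) blast
  have "\<exists>\<gamma>>0. \<forall>i. \<forall>x\<in>closure \<Omega>. \<forall>t. \<gamma> * U i x t \<le> d i * integral \<Omega> (\<lambda>y. J i x y * U i y t)"
  proof (rule ex_pos_uniform_finite)
    show "\<exists>\<gamma>>0. \<forall>x\<in>closure \<Omega>. \<forall>t. \<gamma> * U i x t \<le> d i * integral \<Omega> (\<lambda>y. J i x y * U i y t)" for i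
      by (rule nonlocal_term_dominates_component[OF a U_le])
  next
    fix i \<gamma> \<gamma>'
    assume "\<forall>x\<in>closure \<Omega>. \<forall>t. \<gamma> * U i x t \<le> d i * integral \<Omega> (\<lambda>y. J i x y * U i y t)"
      and "0 < \<gamma>'" "\<gamma>' \<le> \<gamma>"
    then show "\<forall>x\<in>closure \<Omega>. \<forall>t. \<gamma>' * U i x t \<le> d i * integral \<Omega> (\<lambda>y. J i x y * U i y t)"
      using U_pos by (meson less_imp_le mult_right_mono order_trans)
  qed
  then show ?thesis using that by blast
qed

lemma slice_equation:
  assumes x: "x \<in> closure \<Omega>"
  shows "Re (\<phi>' (x, t) $ i) = (\<Sum>k\<in>UNIV. l i k x t * U k x t) - s * U i x t
    + d i * integral \<Omega> (\<lambda>y. J i x y * U i y t)"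
proof -
  have "integral \<Omega> (\<lambda>y. complex_of_real (J i x y) * \<phi> (y, t) $ i) =
      integral \<Omega> (\<lambda>y. complex_of_real (J i x y * U i y t))"
    by (rule integral_cong) (simp add: \<phi>_eq_U[OF closure_subset[THEN subsetD]])
  also have "\<dots> = complex_of_real (integral \<Omega> (\<lambda>y. J i x y * U i y t))"
    using integral_linear[OF integrable_J_U bounded_linear_of_real] by (simp add: o_def)
  finally have "complex_of_real (d i) * complex_of_real (integral \<Omega> (\<lambda>y. J i x y * U i y t))
      + (\<Sum>k\<in>UNIV. complex_of_real (l i k x t) * complex_of_real (U k x t)) - \<phi>' (x, t) $ i
      = complex_of_real s * complex_of_real (U i x t)"
    using arg_cong[OF eigen[OF x, of t], of "\<lambda>v. v $ i"]
    by (simp add: Lop_def cscale_def vector_derivative_at[OF \<phi>_deriv[OF x]] \<phi>_eq_U[OF x])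
  then show ?thesis
    by (simp add: complex_eq_iff Re_sum algebra_simps)
qed

lemma slice_supersolution:
  assumes x: "x \<in> closure \<Omega>" and a: "a > 0"
    and U_le: "\<And>i t. a \<le> U i x t \<and> U i x t \<le> M"
    and \<gamma>: "\<And>i t. \<gamma> * U i x t \<le> d i * integral \<Omega> (\<lambda>y. J i x y * U i y t)"
  shows "periodic_supersolution T (\<lambda>i k. l i k x) (\<lambda>i t. U i x t) (\<lambda>i t. Re (\<phi>' (x, t) $ i)) (s - \<gamma>) a M"
proof
  show "continuous_on UNIV (l i k x)" for i k
    using continuous_on_Pair_slice2[OF l_cont x] by simp
  show "continuous_on UNIV (\<lambda>t. Re (\<phi>' (x, t) $ i))" for i
    using continuous_on_Pair_slice2[OF continuous_on_Re[OF continuous_on_component[OF \<phi>'_cont]] x]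
    by simp
  show "((\<lambda>t. U i x t) has_real_derivative Re (\<phi>' (x, t) $ i)) (at t)" for i t
    using has_vector_derivative_vec_nth[OF \<phi>_deriv[OF x, of t], of i]
    unfolding has_vector_derivative_complex_iff by (simp add: U_def)
  show "(\<Sum>k\<in>UNIV. l i k x t * U k x t) - Re (\<phi>' (x, t) $ i) \<le> (s - \<gamma>) * U i x t" for i t
    using slice_equation[OF x, of t i] \<gamma>[of i t] by (simp add: algebra_simps)
qed (use T_pos l_periodic l_offdiag_nonneg \<phi>_periodic x a U_le in \<open>auto simp: U_def\<close>)

lemma theta_M_less: "theta_M \<Omega> T l < ereal s"
proof -
  obtain a M where a: "a > 0" and U_le: "\<And>i x t. x \<in> closure \<Omega> \<Longrightarrow> a \<le> U i x t \<and> U i x t \<le> M"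
    by (rule U_bounds) blast
  obtain \<gamma> where \<gamma>: "\<gamma> > 0"
    and \<gamma>_le: "\<And>i x t. x \<in> closure \<Omega> \<Longrightarrow> \<gamma> * U i x t \<le> d i * integral \<Omega> (\<lambda>y. J i x y * U i y t)"
    by (rule nonlocal_term_dominates) blast
  have "theta T l x \<le> ereal (s - \<gamma>)" if x: "x \<in> closure \<Omega>" for x
  proof -
    interpret periodic_supersolution T "\<lambda>i k. l i k x" "\<lambda>i t. U i x t" "\<lambda>i t. Re (\<phi>' (x, t) $ i)"
        "s - \<gamma>" a M
      by (rule slice_supersolution[OF x a U_le[OF x] \<gamma>_le[OF x]])
    show ?thesis unfolding theta_def Pop_eq_ode_op by (rule spectral_bound_ode_op_le)
  qed
  then have "theta_M \<Omega> T l \<le> ereal (s - \<gamma>)" unfolding theta_M_def by (rule SUP_least)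
  also have "\<dots> < ereal s" using \<gamma> by simp
  finally show ?thesis .
qed

end

theorem lemma2p7:
  fixes \<Omega> :: "(real^'n::finite) set"
    and T :: real
    and d :: "'m::finite \<Rightarrow> real"
    and J :: "'m \<Rightarrow> real^'n \<Rightarrow> real^'n \<Rightarrow> real"
    and l :: "'m \<Rightarrow> 'm \<Rightarrow> real^'n \<Rightarrow> real \<Rightarrow> real"
  assumes \<Omega>_open: "open \<Omega>" and \<Omega>_ne: "\<Omega> \<noteq> {}" and \<Omega>_bdd: "bounded \<Omega>"
    and \<Omega>_smooth: "smooth_boundary \<Omega>"
    and T_pos: "T > 0"
    and d_pos: "\<And>i. d i > 0"
    and J_cont: "\<And>i. continuous_on UNIV (\<lambda>p. J i (fst p) (snd p))"
    and J_nonneg: "\<And>i x y. J i x y \<ge> 0"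
    and J_diag: "\<And>i x. J i x x > 0"
    and J_int: "\<And>i x. (J i x has_integral 1) UNIV"
    and l_cont: "\<And>i k. continuous_on (closure \<Omega> \<times> UNIV) (\<lambda>p. l i k (fst p) (snd p))"
    and l_per: "\<And>i k x t. x \<in> closure \<Omega> \<Longrightarrow> l i k x (t + T) = l i k x t"
    and L1: "\<And>i k x t. i \<noteq> k \<Longrightarrow> x \<in> closure \<Omega> \<Longrightarrow> l i k x t \<ge> 0"
    and principal: "is_principal_eigenvalue (QS \<Omega>) (Xper \<Omega> T) (Dper \<Omega> T) (Lop \<Omega> d J l)"
  shows "spectral_bound (QS \<Omega>) (Xper \<Omega> T) (Dper \<Omega> T) (Lop \<Omega> d J l) > theta_M \<Omega> T l"
proof -
  obtain s \<phi> where s: "spectral_bound (QS \<Omega>) (Xper \<Omega> T) (Dper \<Omega> T) (Lop \<Omega> d J l) = ereal s"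
    and \<phi>: "\<phi> \<in> Dper \<Omega> T"
    and pos: "\<And>p i. p \<in> QS \<Omega> \<Longrightarrow> Im (\<phi> p $ i) = 0 \<and> Re (\<phi> p $ i) > 0"
    and eigen: "\<And>p. p \<in> QS \<Omega> \<Longrightarrow> Lop \<Omega> d J l \<phi> p = cscale (complex_of_real s) (\<phi> p)"
    using principal unfolding is_principal_eigenvalue_def by blast
  obtain \<phi>' where "\<phi>' \<in> Xper \<Omega> T"
    and "\<And>x t. x \<in> closure \<Omega> \<Longrightarrow> ((\<lambda>s. \<phi> (x, s)) has_vector_derivative \<phi>' (x, t)) (at t)"
    using \<phi> unfolding Dper_def by blast
  then interpret periodic_eigenpair \<Omega> T d J l s \<phi> \<phi>'
    using assms \<phi> pos eigen by unfold_locales (auto simp: Dper_def Xper_def QS_def)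
  show ?thesis using theta_M_less s by simp
qed

end
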